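(* Let $p\ge1$ and let $\mathbf X$ be a random variable with values in $\mathcal G^w_p(V)$ such that $\mathbb E|\langle\mathbf X_{0,T},e_\sigma\rangle|<\infty$ for all $\sigma\in[d]^*$. Then for every $k\ge1$ and nonempty words $\tau_1,\dots,\tau_k$, with $\boldsymbol\tau=(\tau_1,\dots,\tau_k)$, $$\langle\kappa_{\mathbf X},e_{\tau_1}\sqcup\cdots\sqcup e_{\tau_k}\rangle=\sum_{\mathbf a\in\mathrm{Orp}(\boldsymbol\tau)}\mathfrak d(\mathbf a)\,\kappa_{\mathbf X}(\mathbf a).$$
   Context: Let $V=\mathbb R^d$ with basis $e_1,\dots,e_d$; $[n]=\{1,\dots,n\}$; $[d]^*=\bigcup_{m\ge0}[d]^m$ words, $e_\tau=e_{i_1}\otimes\cdots\otimes e_{i_m}$, $e_{()}=1$. $T(V)=\bigoplus_mV^{\otimes m}$, $T((V))=\prod_mV^{\otimes m}$ (algebra under $\otimes$), pairing $\langle s,t\rangle=\sum_\tau s_\tau t_\tau$; $\log y=\sum_{n\ge1}\frac{(-1)^{n-1}}{n}(y-1)^{\otimes n}$ for $\langle y,1\rangle=1$. Shuffle $\sqcup$ on $T(V)$: bilinear extension of $e_{\tau_1}\sqcup e_{\tau_2}=\sum_\sigma e_\sigma$ over interleavings counted with multiplicity. Weakly geometric $p$-rough paths: maps $\mathbf x:\{0\le s\le t\le T\}\to T((V))$ with (i) $\langle\mathbf x_{s,t},1\rangle=1$, $\langle\mathbf x_{s,t},f\sqcup g\rangle=\langle\mathbf x_{s,t},f\rangle\langle\mathbf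 x_{s,t},g\rangle$; (ii) $\mathbf x_{s,t}\otimes\mathbf x_{t,u}=\mathbf x_{s,u}$; (iii) $\max_{1\le m\le p}\sup_D(\sum_i|\pi_m\mathbf x_{t_i,t_{i+1}}|^{p/m})^{1/p}<\infty$; the set is $\mathcal G^w_p(V)$. $\mu_{\mathbf X}=\mathbb E[\mathbf X_{0,T}]$, $\kappa_{\mathbf X}=\log\mu_{\mathbf X}$. Partitions of a finite poset $P$: $\mathcal P(P)$, refinement order, $|\mathbf a|$ number of blocks, $\mathbf a\cap C=\{B\cap C\}\setminus\{\emptyset\}$. $\mathrm{Orp}(P)=\{\ker f: f:P\to\mathbb N\text{ order-preserving}\}$ ($\ker f$ = nonempty fibres); $\mathbf a!=\#\{f:P\to[|\mathbf a|]\text{ order-preserving}:\ker f=\mathbf a\}$; $\mathcal A(\mathbf a)=\{\mathbf b\in\mathrm{Orp}(P):\mathbf b\ge\mathbf a,\ \mathbf b\cap C=\mathbf a\cap C\ \forall\text{ chains }C\subseteq P\}$; $\mathfrak d(\mathbf a)=\sum_{\mathbf b\in\mathcal A(\mathbf a)}(-1)^{|\mathbf b|-1}\mathbf b!/|\mathbf b|$. Word poset: $P_{\boldsymbol\tau}=\{(j,p):j\in[k],p\in[|\tau_j|]\}$ with $(j,p)\le(j',p')$ iff $j=j'$, $p\le p'$ (positions distinct even if letters repeat); $\mathrm{Orp}(\boldsymbol\tau)=\mathrm{Orp}(P_{\boldsymbol\tau})$. For block $B$, $B^j=B\cap(\{j\}\times[|\tau_j|])$, and $e_{B^j}=e_{\tau_j(p_1)}\otimes\cdots\otimes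 e_{\tau_j(p_r)}$ for positions $p_1<\dots<p_r$ of $B^j$. Generalised cumulant: $\kappa_{\mathbf X}(\mathbf a)=\prod_{B\in\mathbf a}\kappa(\langle\mathbf X_{0,T},e_{B^j}\rangle: B^j\ne\emptyset)$, with $\kappa(Y_1,\dots,Y_r)=\sum_{\pi\in\mathcal P([r])}(-1)^{|\pi|-1}(|\pi|-1)!\prod_{A\in\pi}\mathbb E\prod_{i\in A}Y_i$ the classical joint cumulant. *)

theory Defs
  imports "HOL-Probability.Probability" "HOL-Library.Multiset" "HOL-Library.FuncSet"
begin

text \<open>Letters of V = R^d are 1..d; a word is a nat list with letters in {1..d}.
  An element of T((V)) is represented by its coordinate function on words
  (vanishing off words over [d]); an element of T(V) additionally has finite support.\<close>

definition is_word :: "nat \<Rightarrow> nat list \<Rightarrow> bool" where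
  "is_word d \<tau> \<longleftrightarrow> set \<tau> \<subseteq> {1..d}"

definition words_len :: "nat \<Rightarrow> nat \<Rightarrow> nat list set" where
  "words_len d m = {\<tau>. is_word d \<tau> \<and> length \<tau> = m}"

definition tsupp :: "(nat list \<Rightarrow> real) \<Rightarrow> nat list set" where
  "tsupp f = {\<tau>. f \<tau> \<noteq> 0}"

definition is_series :: "nat \<Rightarrow> (nat list \<Rightarrow> real) \<Rightarrow> bool" where
  "is_series d x \<longleftrightarrow> (\<forall>\<tau>. \<not> is_word d \<tau> \<longrightarrow> x \<tau> = 0)"

definition is_poly :: "nat \<Rightarrow> (nat list \<Rightarrow> real) \<Rightarrow> bool" where
  "is_poly d f \<longleftrightarrow> is_series d f \<and> finite (tsupp f)"

definition ew :: "nat list \<Rightarrow> nat list \<Rightarrow> real" where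
  "ew \<tau> = (\<lambda>\<sigma>. if \<sigma> = \<tau> then 1 else 0)"

definition tpair :: "(nat list \<Rightarrow> real) \<Rightarrow> (nat list \<Rightarrow> real) \<Rightarrow> real" where
  "tpair s t = (\<Sum>\<tau>\<in>tsupp t. s \<tau> * t \<tau>)"

definition tmul :: "(nat list \<Rightarrow> real) \<Rightarrow> (nat list \<Rightarrow> real) \<Rightarrow> nat list \<Rightarrow> real" where
  "tmul s t = (\<lambda>\<tau>. \<Sum>i\<le>length \<tau>. s (take i \<tau>) * t (drop i \<tau>))"

primrec tpow :: "(nat list \<Rightarrow> real) \<Rightarrow> nat \<Rightarrow> nat list \<Rightarrow> real" where
  "tpow s 0 = ew []"
| "tpow s (Suc n) = tmul s (tpow s n)"

text \<open>log y = sum_{n>=1} (-1)^(n-1)/n (y-1)^n, coordinatewise (each coordinate series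
  is eventually zero when <y,1> = 1).\<close>
definition tlog :: "(nat list \<Rightarrow> real) \<Rightarrow> nat list \<Rightarrow> real" where
  "tlog y = (\<lambda>\<tau>. \<Sum>n. (-1) ^ n / real (Suc n) * tpow (\<lambda>\<sigma>. y \<sigma> - ew [] \<sigma>) (Suc n) \<tau>)"

fun shuf_w :: "nat list \<Rightarrow> nat list \<Rightarrow> nat list multiset" where
  "shuf_w [] ys = {#ys#}"
| "shuf_w xs [] = {#xs#}"
| "shuf_w (x # xs) (y # ys) =
     image_mset (Cons x) (shuf_w xs (y # ys)) + image_mset (Cons y) (shuf_w (x # xs) ys)"

definition tshuffle :: "(nat list \<Rightarrow> real) \<Rightarrow> (nat list \<Rightarrow> real) \<Rightarrow> nat list \<Rightarrow> real" where
  "tshuffle f g = (\<lambda>\<sigma>. \<Sum>u\<in>tsupp f. \<Sum>v\<in>tsupp g. f u * g v * real (count (shuf_w u v) \<sigma>))"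

definition level_norm :: "nat \<Rightarrow> nat \<Rightarrow> (nat list \<Rightarrow> real) \<Rightarrow> real" where
  "level_norm d m x = sqrt (\<Sum>\<tau>\<in>words_len d m. (x \<tau>)\<^sup>2)"

definition wg_rough_paths ::
  "nat \<Rightarrow> real \<Rightarrow> real \<Rightarrow> (real \<times> real \<Rightarrow> nat list \<Rightarrow> real) set" where
  "wg_rough_paths d p T = {x.
     (\<forall>s t. 0 \<le> s \<and> s \<le> t \<and> t \<le> T \<longrightarrow>
        is_series d (x (s, t)) \<and> x (s, t) [] = 1 \<and>
        (\<forall>f g. is_poly d f \<and> is_poly d g \<longrightarrow>
           tpair (x (s, t)) (tshuffle f g) = tpair (x (s, t)) f * tpair (x (s, t)) g)) \<and>
     (\<forall>s t u. 0 \<le> s \<and> s \<le> t \<and> t \<le> u \<and> u \<le> T \<longrightarrow> tmul (x (s, t)) (x (t, u)) = x (s, u)) \<and>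
     (\<forall>m::nat. 1 \<le> m \<and> real m \<le> p \<longrightarrow>
        (\<exists>C. \<forall>(n::nat) (ti::nat \<Rightarrow> real).
            ti 0 = 0 \<and> ti n = T \<and> (\<forall>i<n. ti i < ti (Suc i)) \<longrightarrow>
            (\<Sum>i<n. level_norm d m (x (ti i, ti (Suc i))) powr (p / real m)) powr (1 / p) \<le> C))}"

definition order_pres :: "'a set \<Rightarrow> ('a \<Rightarrow> 'a \<Rightarrow> bool) \<Rightarrow> ('a \<Rightarrow> nat) \<Rightarrow> bool" where
  "order_pres P le f \<longleftrightarrow> (\<forall>x\<in>P. \<forall>y\<in>P. le x y \<longrightarrow> f x \<le> f y)"

definition kern :: "'a set \<Rightarrow> ('a \<Rightarrow> nat) \<Rightarrow> 'a set set" where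
  "kern P f = (\<lambda>n. {x\<in>P. f x = n}) ` (f ` P)"

definition Orp :: "'a set \<Rightarrow> ('a \<Rightarrow> 'a \<Rightarrow> bool) \<Rightarrow> 'a set set set" where
  "Orp P le = {kern P f | f. order_pres P le f}"

definition part_fact :: "'a set \<Rightarrow> ('a \<Rightarrow> 'a \<Rightarrow> bool) \<Rightarrow> 'a set set \<Rightarrow> nat" where
  "part_fact P le a = card {f \<in> P \<rightarrow>\<^sub>E {1..card a}. order_pres P le f \<and> kern P f = a}"

definition refines :: "'a set set \<Rightarrow> 'a set set \<Rightarrow> bool" where
  "refines a b \<longleftrightarrow> (\<forall>A\<in>a. \<exists>B\<in>b. A \<subseteq> B)"

definition is_chain :: "'a set \<Rightarrow> ('a \<Rightarrow> 'a \<Rightarrow> bool) \<Rightarrow> 'a set \<Rightarrow> bool" where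
  "is_chain P le C \<longleftrightarrow> C \<subseteq> P \<and> (\<forall>x\<in>C. \<forall>y\<in>C. le x y \<or> le y x)"

definition restr_part :: "'a set set \<Rightarrow> 'a set \<Rightarrow> 'a set set" where
  "restr_part a C = (\<lambda>B. B \<inter> C) ` a - {{}}"

definition Aset :: "'a set \<Rightarrow> ('a \<Rightarrow> 'a \<Rightarrow> bool) \<Rightarrow> 'a set set \<Rightarrow> 'a set set set" where
  "Aset P le a = {b \<in> Orp P le. refines a b \<and>
       (\<forall>C. is_chain P le C \<longrightarrow> restr_part b C = restr_part a C)}"

definition dcoef :: "'a set \<Rightarrow> ('a \<Rightarrow> 'a \<Rightarrow> bool) \<Rightarrow> 'a set set \<Rightarrow> real" where
  "dcoef P le a = (\<Sum>b\<in>Aset P le a.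
       (-1) ^ (card b - 1) * real (part_fact P le b) / real (card b))"

section \<open>Word poset (0-based indices: word j < k, position q < |tau_j|)\<close>

definition word_poset :: "nat list list \<Rightarrow> (nat \<times> nat) set" where
  "word_poset ts = {(j, q). j < length ts \<and> q < length (ts ! j)}"

definition word_le :: "nat \<times> nat \<Rightarrow> nat \<times> nat \<Rightarrow> bool" where
  "word_le x y \<longleftrightarrow> fst x = fst y \<and> snd x \<le> snd y"

definition subword :: "nat list list \<Rightarrow> (nat \<times> nat) set \<Rightarrow> nat \<Rightarrow> nat list" where
  "subword ts B j = map (\<lambda>q. ts ! j ! q) (sorted_list_of_set {q. (j, q) \<in> B})"

definition joint_cumulant :: "'w measure \<Rightarrow> 'i set \<Rightarrow> ('i \<Rightarrow> 'w \<Rightarrow> real) \<Rightarrow> real" where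
  "joint_cumulant M J Y = (\<Sum>\<pi>\<in>{\<pi>. partition_on J \<pi>}.
      (-1) ^ (card \<pi> - 1) * fact (card \<pi> - 1) *
      (\<Prod>A\<in>\<pi>. integral\<^sup>L M (\<lambda>\<omega>. \<Prod>i\<in>A. Y i \<omega>)))"

definition exp_sig :: "'w measure \<Rightarrow> ('w \<Rightarrow> real \<times> real \<Rightarrow> nat list \<Rightarrow> real) \<Rightarrow> real \<Rightarrow> nat list \<Rightarrow> real" where
  "exp_sig M X T = (\<lambda>\<tau>. integral\<^sup>L M (\<lambda>\<omega>. X \<omega> (0, T) \<tau>))"

definition sig_cumulant :: "'w measure \<Rightarrow> ('w \<Rightarrow> real \<times> real \<Rightarrow> nat list \<Rightarrow> real) \<Rightarrow> real \<Rightarrow> nat list \<Rightarrow> real" where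
  "sig_cumulant M X T = tlog (exp_sig M X T)"

definition gen_cumulant :: "'w measure \<Rightarrow> ('w \<Rightarrow> real \<times> real \<Rightarrow> nat list \<Rightarrow> real) \<Rightarrow> real
     \<Rightarrow> nat list list \<Rightarrow> (nat \<times> nat) set set \<Rightarrow> real" where
  "gen_cumulant M X T ts a = (\<Prod>B\<in>a.
      joint_cumulant M {j. j < length ts \<and> {q. (j, q) \<in> B} \<noteq> {}}
        (\<lambda>j \<omega>. X \<omega> (0, T) (subword ts B j)))"

end

theory Submission
  imports Defs
begin

text \<open>
  Pairing a character of the shuffle algebra with the shuffle of the words \<open>\<tau>\<^sub>1, \<dots>, \<tau>\<^sub>k\<close>
  amounts to summing it over the linear extensions of the word poset P: the shuffles of the
  chains of positions of the individual words are exactly these linear extensions.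
  Expanding \<open>log \<mu>\<close> as \<open>\<Sum>\<^sub>n (-1)^(n-1)/n (\<mu> - 1)^n\<close>, the n-th tensor power summed over linear
  extensions becomes a sum over monotone surjections of P onto n levels, every level contributing
  the sum of \<open>\<mu>\<close> over its own linear extensions; as the signature is a character, that sum is the
  mixed moment of the level: the expectation of the product of the coordinates along its subwords.
  Grouping the surjections by their kernel b gives \<open>\<Sum>\<^sub>b (-1)^(|b|-1) b!/|b| \<Prod>\<^sub>B\<^sub>\<in>\<^sub>b E(B)\<close>.
  Finally every block moment is expanded into joint cumulants over the partitions of the words the
  block meets; choosing such a partition for every block of b is the same as choosing an
  order-preserving partition a with \<open>b \<in> Aset P word_le a\<close>, and exchanging the two sums produces
  the coefficients \<open>dcoef P word_le a\<close>.
\<close>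

text \<open>A polymorphic copy of \<open>shuf_w\<close>: we shuffle lists of positions, not only of letters.\<close>
fun shuffle_mset :: "'a list \<Rightarrow> 'a list \<Rightarrow> 'a list multiset" where
  "shuffle_mset [] ys = {#ys#}"
| "shuffle_mset xs [] = {#xs#}"
| "shuffle_mset (x # xs) (y # ys) =
     image_mset (Cons x) (shuffle_mset xs (y # ys)) + image_mset (Cons y) (shuffle_mset (x # xs) ys)"

fun shuffle_mset_list :: "'a list list \<Rightarrow> 'a list multiset" where
  "shuffle_mset_list [] = {#[]#}"
| "shuffle_mset_list (w # ws) = sum_mset (image_mset (shuffle_mset w) (shuffle_mset_list ws))"

lemma shuf_w_eq_shuffle_mset: "shuf_w u v = shuffle_mset u v"
  by (induction u v rule: shuf_w.induct) auto

lemma shuffle_mset_map: "shuffle_mset (map g u) (map g v) = image_mset (map g) (shuffle_mset u v)"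
  by (induction u v rule: shuffle_mset.induct) (auto simp: multiset.map_comp comp_def)

lemma image_mset_sum_mset: "image_mset f (sum_mset M) = sum_mset (image_mset (image_mset f) M)"
  by (induction M) auto

lemma shuffle_mset_list_map:
  "shuffle_mset_list (map (map g) ws) = image_mset (map g) (shuffle_mset_list ws)"
  by (induction ws)
    (simp_all add: multiset.map_comp comp_def shuffle_mset_map image_mset_sum_mset)

lemma set_mset_shuffle_mset: "zs \<in># shuffle_mset xs ys \<Longrightarrow> set zs = set xs \<union> set ys"
  by (induction xs ys arbitrary: zs rule: shuffle_mset.induct) auto

lemma set_mset_shuffle_mset_list:
  "zs \<in># shuffle_mset_list ws \<Longrightarrow> set zs = (\<Union>w\<in>set ws. set w)"
proof (induction ws arbitrary: zs)
  case (Cons w ws)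
  then obtain v where "v \<in># shuffle_mset_list ws" "zs \<in># shuffle_mset w v" by auto
  then show ?case using Cons.IH[of v] set_mset_shuffle_mset[of zs w v] by auto
qed simp

lemma shuffle_mset_eq_mset_set_shuffles:
  "distinct xs \<Longrightarrow> distinct ys \<Longrightarrow> set xs \<inter> set ys = {} \<Longrightarrow>
   shuffle_mset xs ys = mset_set (shuffles xs ys)"
proof (induction xs ys rule: shuffle_mset.induct)
  case (3 x xs y ys)
  have "x \<noteq> y" using "3.prems" by auto
  then have "Cons x ` shuffles xs (y # ys) \<inter> Cons y ` shuffles (x # xs) ys = {}" by auto
  then show ?case
    using "3" by (simp add: image_mset_mset_set mset_set_Union)
qed simp_all

lemma sorted_wrt_shuffles:
  assumes "sorted_wrt r xs" "sorted_wrt r ys" "\<forall>a\<in>set xs. \<forall>b\<in>set ys. r a b \<and> r b a"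
    and "zs \<in> shuffles xs ys"
  shows "sorted_wrt r zs"
  using assms
proof (induction xs ys arbitrary: zs rule: shuffles.induct)
  case (3 x xs y ys)
  from "3.prems"(4) consider
      zs' where "zs = x # zs'" "zs' \<in> shuffles xs (y # ys)"
    | zs' where "zs = y # zs'" "zs' \<in> shuffles (x # xs) ys"
    by auto
  then show ?case
  proof cases
    case 1
    then show ?thesis using "3.IH"(1) "3.prems" set_shuffles[of zs' xs "y # ys"] by auto
  next
    case 2
    then show ?thesis using "3.IH"(2) "3.prems" set_shuffles[of zs' "x # xs" ys] by auto
  qed
qed simp_all

lemma sum_count_eq_sum_mset:
  fixes f :: "'a \<Rightarrow> real"
  assumes "finite S" "set_mset N \<subseteq> S"
  shows "(\<Sum>v\<in>S. real (count N v) * f v) = (\<Sum>v\<in>#N. f v)"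
  using assms(2)
proof (induction N)
  case (add x N)
  have "(\<Sum>v\<in>S. real (count (add_mset x N) v) * f v)
      = (\<Sum>v\<in>S. real (count N v) * f v) + (\<Sum>v\<in>S. if v = x then f v else 0)"
    by (auto simp: sum.distrib[symmetric] algebra_simps intro!: sum.cong)
  then show ?case using add assms(1) by (simp add: sum.delta)
qed simp

lemma tsupp_count: "tsupp (\<lambda>\<sigma>. real (count N \<sigma>)) = set_mset N"
  by (auto simp: tsupp_def)

lemma tsupp_ew: "tsupp (ew w) = {w}"
  by (auto simp: tsupp_def ew_def)

lemma tpair_count: "tpair x (\<lambda>\<sigma>. real (count N \<sigma>)) = (\<Sum>\<sigma>\<in>#N. x \<sigma>)"
  unfolding tpair_def tsupp_count
  by (subst sum_count_eq_sum_mset[symmetric]) (auto simp: mult.commute)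

lemma tpair_ew: "tpair x (ew w) = x w"
  unfolding tpair_def tsupp_ew by (simp add: ew_def)

lemma count_sum_mset_image:
  "count (sum_mset (image_mset g N)) s = (\<Sum>v\<in>#N. count (g v) s)"
  by (induction N) auto

lemma foldr_tshuffle_ew:
  "foldr tshuffle (map ew ws) (ew []) = (\<lambda>\<sigma>. real (count (shuffle_mset_list ws) \<sigma>))"
proof (induction ws)
  case Nil
  then show ?case by (auto simp: ew_def)
next
  case (Cons w ws)
  have "foldr tshuffle (map ew (w # ws)) (ew []) s
      = tshuffle (ew w) (\<lambda>\<sigma>. real (count (shuffle_mset_list ws) \<sigma>)) s" for s
    using Cons by simp
  also have "\<dots> s = (\<Sum>v\<in>set_mset (shuffle_mset_list ws).
           real (count (shuffle_mset_list ws) v) * real (count (shuffle_mset w v) s))" for s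
    unfolding tshuffle_def tsupp_ew tsupp_count by (simp add: ew_def shuf_w_eq_shuffle_mset)
  also have "\<dots> s = real (count (shuffle_mset_list (w # ws)) s)" for s
    by (subst sum_count_eq_sum_mset) (auto simp: count_sum_mset_image multiset.map_comp comp_def)
  finally show ?case by auto
qed

section \<open>Linear extensions of the word order\<close>

definition may_precede :: "nat \<times> nat \<Rightarrow> nat \<times> nat \<Rightarrow> bool" where
  "may_precede x y \<longleftrightarrow> x \<noteq> y \<and> (fst x = fst y \<longrightarrow> snd x < snd y)"

definition lin_exts :: "(nat \<times> nat) set \<Rightarrow> (nat \<times> nat) list set" where
  "lin_exts Q = {L. set L = Q \<and> sorted_wrt may_precede L}"

definition word_chain :: "nat \<Rightarrow> (nat \<times> nat) set \<Rightarrow> (nat \<times> nat) list" where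
  "word_chain j Q = map (Pair j) (sorted_list_of_set {q. (j, q) \<in> Q})"

lemma sorted_may_precede_distinct: "sorted_wrt may_precede L \<Longrightarrow> distinct L"
  by (induction L) (auto simp: may_precede_def)

lemma finite_lin_exts: "finite Q \<Longrightarrow> finite (lin_exts Q)"
  by (rule finite_subset[of _ "{L. set L \<subseteq> Q \<and> distinct L}"])
    (auto simp: lin_exts_def sorted_may_precede_distinct intro: finite_subset_distinct)

lemma lin_exts_empty: "lin_exts {} = {[]}"
  by (auto simp: lin_exts_def)

lemma length_lin_ext: "L \<in> lin_exts Q \<Longrightarrow> length L = card Q"
  by (auto simp: lin_exts_def dest!: sorted_may_precede_distinct distinct_card)

lemma finite_word_fibre: "finite Q \<Longrightarrow> finite {q. (j, q) \<in> Q}"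
  by (rule finite_subset[of _ "snd ` Q"]) force+

lemma set_word_chain: "finite Q \<Longrightarrow> set (word_chain j Q) = {x \<in> Q. fst x = j}"
  using finite_word_fibre[of Q j] by (auto simp: word_chain_def)

lemma sorted_word_chain: "sorted_wrt may_precede (word_chain j Q)"
  unfolding word_chain_def sorted_wrt_map
  by (rule sorted_wrt_mono_rel[OF _ strict_sorted_list_of_set]) (auto simp: may_precede_def)

lemma word_chain_cong: "(\<And>q. (j, q) \<in> Q' \<longleftrightarrow> (j, q) \<in> Q) \<Longrightarrow> word_chain j Q' = word_chain j Q"
  by (simp add: word_chain_def)

lemma sorted_chain_eq_word_chain:
  assumes sorted: "sorted_wrt may_precede L" and word: "\<forall>x\<in>set L. fst x = j"
  shows "L = word_chain j (set L)"
proof -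
  have "sorted_wrt (<) (map snd L)"
    unfolding sorted_wrt_map using sorted_wrt_mono_rel[OF _ sorted] word
    by (auto simp: may_precede_def)
  moreover have "set (map snd L) = {q. (j, q) \<in> set L}"
    using word by force
  ultimately have "sorted_list_of_set {q. (j, q) \<in> set L} = map snd L"
    by (metis sorted_list_of_set.set_sorted_key_list_of_set strict_sorted_equal
        strict_sorted_list_of_set List.finite_set)
  moreover have "map (Pair j) (map snd L) = L"
    using word by (induction L) auto
  ultimately show ?thesis by (simp add: word_chain_def)
qed

lemma filter_lin_ext_word:
  assumes "finite Q" "L \<in> lin_exts Q"
  shows "filter (\<lambda>x. fst x = j) L = word_chain j Q"
proof -
  have "sorted_wrt may_precede (filter (\<lambda>x. fst x = j) L)"
    using assms(2) by (simp add: lin_exts_def sorted_wrt_filter)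
  then have "filter (\<lambda>x. fst x = j) L = word_chain j {x \<in> Q. fst x = j}"
    using sorted_chain_eq_word_chain assms(2) by (fastforce simp: lin_exts_def)
  also have "\<dots> = word_chain j Q" by (rule word_chain_cong) simp
  finally show ?thesis .
qed

lemma disjoint_shuffles:
  assumes "set u \<inter> set v = {}" "set u \<inter> set v' = {}" "v \<noteq> v'"
  shows "shuffles u v \<inter> shuffles u v' = {}"
proof (rule ccontr)
  assume "shuffles u v \<inter> shuffles u v' \<noteq> {}"
  then obtain L where "L \<in> shuffles u v" "L \<in> shuffles u v'" by blast
  then have "v = filter (\<lambda>x. x \<notin> set u) L" "v' = filter (\<lambda>x. x \<notin> set u) L"
    using filter_shuffles_disjoint1(2) assms(1,2) by metis+
  then show False using assms(3) by simp
qed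

lemma lin_exts_eq_UN_shuffles:
  assumes "finite Q"
  shows "lin_exts Q = (\<Union>v\<in>lin_exts {x \<in> Q. fst x \<noteq> j}. shuffles (word_chain j Q) v)"
proof (intro equalityI subsetI)
  fix L assume L: "L \<in> lin_exts Q"
  define v where "v = filter (\<lambda>x. \<not> fst x = j) L"
  have "v \<in> lin_exts {x \<in> Q. fst x \<noteq> j}"
    using L by (auto simp: v_def lin_exts_def sorted_wrt_filter)
  moreover have "L \<in> shuffles (word_chain j Q) v"
    using partition_in_shuffles[of L "\<lambda>x. fst x = j"] filter_lin_ext_word[OF assms L]
    by (simp add: v_def)
  ultimately show "L \<in> (\<Union>v\<in>lin_exts {x \<in> Q. fst x \<noteq> j}. shuffles (word_chain j Q) v)"
    by blast
next
  fix L assume "L \<in> (\<Union>v\<in>lin_exts {x \<in> Q. fst x \<noteq> j}. shuffles (word_chain j Q) v)"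
  then obtain v where v: "v \<in> lin_exts {x \<in> Q. fst x \<noteq> j}" "L \<in> shuffles (word_chain j Q) v"
    by blast
  have "sorted_wrt may_precede L"
  proof (rule sorted_wrt_shuffles[OF sorted_word_chain _ _ v(2)])
    show "sorted_wrt may_precede v" using v(1) by (simp add: lin_exts_def)
    show "\<forall>a\<in>set (word_chain j Q). \<forall>b\<in>set v. may_precede a b \<and> may_precede b a"
      using v(1) set_word_chain[OF assms] by (auto simp: lin_exts_def may_precede_def)
  qed
  moreover have "set L = Q"
    using set_shuffles[OF v(2)] v(1) set_word_chain[OF assms] by (auto simp: lin_exts_def)
  ultimately show "L \<in> lin_exts Q" by (simp add: lin_exts_def)
qed

lemma mset_set_UN_disjoint:
  assumes "finite I" "\<And>i. i \<in> I \<Longrightarrow> finite (A i)"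
    and "\<And>i k. i \<in> I \<Longrightarrow> k \<in> I \<Longrightarrow> i \<noteq> k \<Longrightarrow> A i \<inter> A k = {}"
  shows "mset_set (\<Union>i\<in>I. A i) = (\<Sum>i\<in>I. mset_set (A i))"
  using assms
proof (induction I rule: finite_induct)
  case (insert i I)
  have "A i \<inter> (\<Union>k\<in>I. A k) = {}" using insert by blast
  then have "mset_set (\<Union>k\<in>insert i I. A k) = mset_set (A i) + mset_set (\<Union>k\<in>I. A k)"
    using insert by (simp add: mset_set_Union)
  then show ?case using insert by simp
qed simp

lemma shuffle_mset_list_word_chains:
  assumes "finite Q" "distinct js"
  shows "shuffle_mset_list (map (\<lambda>j. word_chain j Q) js) = mset_set (lin_exts {x \<in> Q. fst x \<in> set js})"
  using assms(2)
proof (induction js)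
  case Nil
  then show ?case by (simp add: lin_exts_empty)
next
  case (Cons j js)
  define Q' where "Q' = {x \<in> Q. fst x \<in> set (j # js)}"
  have Q'_fin: "finite Q'" using assms(1) by (simp add: Q'_def)
  have others: "{x \<in> Q'. fst x \<noteq> j} = {x \<in> Q. fst x \<in> set js}"
    using Cons.prems by (auto simp: Q'_def)
  have chain: "word_chain j Q = word_chain j Q'"
    unfolding Q'_def by (rule word_chain_cong[symmetric]) simp
  let ?u = "word_chain j Q'"
  have "shuffle_mset_list (map (\<lambda>j. word_chain j Q) (j # js))
      = (\<Sum>v\<in>lin_exts {x \<in> Q'. fst x \<noteq> j}. shuffle_mset ?u v)"
    using Cons by (simp add: others chain sum_unfold_sum_mset)
  also have "\<dots> = (\<Sum>v\<in>lin_exts {x \<in> Q'. fst x \<noteq> j}. mset_set (shuffles ?u v))"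
    using set_word_chain[OF Q'_fin]
    by (intro sum.cong refl shuffle_mset_eq_mset_set_shuffles)
      (auto simp: lin_exts_def sorted_word_chain sorted_may_precede_distinct)
  also have "\<dots> = mset_set (lin_exts Q')"
    unfolding lin_exts_eq_UN_shuffles[OF Q'_fin, of j]
    using set_word_chain[OF Q'_fin] Q'_fin
    by (intro mset_set_UN_disjoint[symmetric] finite_lin_exts disjoint_shuffles)
      (auto simp: lin_exts_def)
  finally show ?case by (simp add: Q'_def)
qed

definition letter :: "nat list list \<Rightarrow> nat \<times> nat \<Rightarrow> nat" where
  "letter ts x = ts ! fst x ! snd x"

definition subwords :: "nat list list \<Rightarrow> (nat \<times> nat) set \<Rightarrow> nat list list" where
  "subwords ts Q = map (subword ts Q) [0..<length ts]"

lemma subword_eq_map_letter: "subword ts Q j = map (letter ts) (word_chain j Q)"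
  by (simp add: subword_def word_chain_def letter_def)

lemma tpair_shuffle_subwords:
  assumes "finite Q" "\<forall>x\<in>Q. fst x < length ts"
  shows "tpair x (foldr tshuffle (map ew (subwords ts Q)) (ew []))
       = (\<Sum>L\<in>lin_exts Q. x (map (letter ts) L))"
proof -
  have "subwords ts Q = map (map (letter ts)) (map (\<lambda>j. word_chain j Q) [0..<length ts])"
    by (simp add: subwords_def subword_eq_map_letter)
  then have "shuffle_mset_list (subwords ts Q)
      = image_mset (map (letter ts)) (mset_set (lin_exts {y \<in> Q. fst y \<in> set [0..<length ts]}))"
    by (simp only: shuffle_mset_list_map shuffle_mset_list_word_chains[OF assms(1) distinct_upt])
  also have "{y \<in> Q. fst y \<in> set [0..<length ts]} = Q" using assms(2) by auto
  finally show ?thesis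
    unfolding foldr_tshuffle_ew tpair_count
    by (simp add: sum_unfold_sum_mset multiset.map_comp comp_def)
qed

lemma subwords_word_poset: "subwords ts (word_poset ts) = ts"
proof (rule nth_equalityI)
  fix j assume "j < length (subwords ts (word_poset ts))"
  then have "j < length ts" by (simp add: subwords_def)
  moreover have "{q. (j, q) \<in> word_poset ts} = {..<length (ts ! j)}"
    using \<open>j < length ts\<close> by (auto simp: word_poset_def)
  ultimately show "subwords ts (word_poset ts) ! j = ts ! j"
    by (simp add: subwords_def subword_def lessThan_atLeast0 map_nth)
qed (simp add: subwords_def)

section \<open>Tensor powers summed over linear extensions\<close>

definition down_sets :: "(nat \<times> nat) set \<Rightarrow> (nat \<times> nat) set set" where
  "down_sets Q = {Q1. Q1 \<subseteq> Q \<and> (\<forall>x\<in>Q1. \<forall>z\<in>Q. word_le z x \<longrightarrow> z \<in> Q1)}"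

definition mono_maps :: "(nat \<times> nat) set \<Rightarrow> nat \<Rightarrow> (nat \<times> nat \<Rightarrow> nat) set" where
  "mono_maps Q m = {f \<in> Q \<rightarrow>\<^sub>E {..<m}. order_pres Q word_le f}"

definition block_sum :: "(nat list \<Rightarrow> real) \<Rightarrow> (nat \<times> nat \<Rightarrow> nat) \<Rightarrow> (nat \<times> nat) set
    \<Rightarrow> (nat \<times> nat \<Rightarrow> nat) \<Rightarrow> nat \<Rightarrow> real" where
  "block_sum y g Q f l = (\<Sum>L\<in>lin_exts {x \<in> Q. f x = l}. y (map g L))"

lemma finite_down_sets: "finite Q \<Longrightarrow> finite (down_sets Q)"
  by (rule finite_subset[of _ "Pow Q"]) (auto simp: down_sets_def)

lemma finite_mono_maps: "finite Q \<Longrightarrow> finite (mono_maps Q m)"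
  by (rule finite_subset[of _ "Q \<rightarrow>\<^sub>E {..<m}"]) (auto simp: mono_maps_def finite_PiE)

lemma lin_ext_take_drop:
  assumes "L \<in> lin_exts Q"
  shows "set (take i L) \<in> down_sets Q" "take i L \<in> lin_exts (set (take i L))"
    and "drop i L \<in> lin_exts (Q - set (take i L))"
proof -
  have sorted: "sorted_wrt may_precede L" and set_L: "set L = Q"
    using assms by (simp_all add: lin_exts_def)
  have cross: "may_precede a b" if "a \<in> set (take i L)" "b \<in> set (drop i L)" for a b
    using sorted that unfolding sorted_wrt_append[of _ "take i L" "drop i L", simplified] by blast
  have "set (take i L) \<union> set (drop i L) = Q"
    using set_L by (metis append_take_drop_id set_append)
  moreover have "set (take i L) \<inter> set (drop i L) = {}"
    using set_take_disj_set_drop_if_distinct[OF sorted_may_precede_distinct[OF sorted], of i i] by simp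
  ultimately have set_drop: "set (drop i L) = Q - set (take i L)" by blast
  show "take i L \<in> lin_exts (set (take i L))" "drop i L \<in> lin_exts (Q - set (take i L))"
    using sorted set_drop by (simp_all add: lin_exts_def)
  have "z \<in> set (take i L)" if "x \<in> set (take i L)" "z \<in> Q" "word_le z x" for x z
    using cross[of x z] that set_drop by (auto simp: word_le_def may_precede_def)
  then show "set (take i L) \<in> down_sets Q"
    using set_L set_take_subset[of i L] by (auto simp: down_sets_def)
qed

lemma lin_ext_append:
  assumes "Q1 \<in> down_sets Q" "L1 \<in> lin_exts Q1" "L2 \<in> lin_exts (Q - Q1)"
  shows "L1 @ L2 \<in> lin_exts Q"
proof -
  have "may_precede a b" if "a \<in> Q1" "b \<in> Q - Q1" for a b
    using assms(1) that by (force simp: down_sets_def may_precede_def word_le_def)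
  then show ?thesis
    using assms by (auto simp: lin_exts_def down_sets_def sorted_wrt_append)
qed

lemma sum_lin_exts_split:
  assumes "finite Q"
  shows "(\<Sum>L\<in>lin_exts Q. \<Sum>i\<le>length L. h (take i L) (drop i L))
       = (\<Sum>Q1\<in>down_sets Q. \<Sum>L1\<in>lin_exts Q1. \<Sum>L2\<in>lin_exts (Q - Q1). h L1 L2)"
proof -
  have fin: "finite (lin_exts A)" if "A \<subseteq> Q" for A
    using finite_lin_exts finite_subset[OF that assms] by blast
  have "(\<Sum>L\<in>lin_exts Q. \<Sum>i\<le>length L. h (take i L) (drop i L))
      = (\<Sum>(L, i)\<in>Sigma (lin_exts Q) (\<lambda>L. {..length L}). h (take i L) (drop i L))"
    using finite_lin_exts[OF assms] by (simp add: sum.Sigma)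
  also have "\<dots> = (\<Sum>(Q1, L1, L2)\<in>Sigma (down_sets Q) (\<lambda>Q1. lin_exts Q1 \<times> lin_exts (Q - Q1)). h L1 L2)"
  proof (rule sum.reindex_bij_witness[where i = "\<lambda>(Q1, L1, L2). (L1 @ L2, length L1)"
        and j = "\<lambda>(L, i). (set (take i L), take i L, drop i L)"])
    fix t assume "t \<in> Sigma (down_sets Q) (\<lambda>Q1. lin_exts Q1 \<times> lin_exts (Q - Q1))"
    then obtain Q1 L1 L2 where t: "t = (Q1, L1, L2)" "Q1 \<in> down_sets Q"
      "L1 \<in> lin_exts Q1" "L2 \<in> lin_exts (Q - Q1)" by auto
    then show "(\<lambda>(L, i). (set (take i L), take i L, drop i L))
        ((\<lambda>(Q1, L1, L2). (L1 @ L2, length L1)) t) = t"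
      by (simp add: lin_exts_def)
    show "(\<lambda>(Q1, L1, L2). (L1 @ L2, length L1)) t \<in> Sigma (lin_exts Q) (\<lambda>L. {..length L})"
      using t lin_ext_append by simp
  next
    fix p assume "p \<in> Sigma (lin_exts Q) (\<lambda>L. {..length L})"
    then obtain L i where p: "p = (L, i)" "L \<in> lin_exts Q" "i \<le> length L" by auto
    then show "(\<lambda>(Q1, L1, L2). (L1 @ L2, length L1))
        ((\<lambda>(L, i). (set (take i L), take i L, drop i L)) p) = p"
      by simp
    show "(\<lambda>(L, i). (set (take i L), take i L, drop i L)) p
        \<in> Sigma (down_sets Q) (\<lambda>Q1. lin_exts Q1 \<times> lin_exts (Q - Q1))"
      using p lin_ext_take_drop by simp
  qed (simp add: split_def)
  also have "\<dots> = (\<Sum>Q1\<in>down_sets Q. \<Sum>(L1, L2)\<in>lin_exts Q1 \<times> lin_exts (Q - Q1). h L1 L2)"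
    using finite_down_sets[OF assms] fin
    by (intro sum.Sigma[symmetric]) (auto simp: down_sets_def)
  also have "\<dots> = (\<Sum>Q1\<in>down_sets Q. \<Sum>L1\<in>lin_exts Q1. \<Sum>L2\<in>lin_exts (Q - Q1). h L1 L2)"
    by (simp add: sum.cartesian_product)
  finally show ?thesis .
qed

lemma mono_maps_push:
  assumes "Q1 \<in> down_sets Q" "h \<in> mono_maps (Q - Q1) m"
  shows "restrict (\<lambda>x. if x \<in> Q1 then 0 else Suc (h x)) Q \<in> mono_maps Q (Suc m)"
proof -
  have "h x \<le> h z" if "x \<in> Q - Q1" "z \<in> Q - Q1" "word_le x z" for x z
    using assms(2) that by (auto simp: mono_maps_def order_pres_def)
  moreover have "z \<notin> Q1" if "x \<notin> Q1" "x \<in> Q" "z \<in> Q" "word_le x z" for x z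
    using assms(1) that by (auto simp: down_sets_def)
  ultimately show ?thesis
    using assms(2) by (fastforce simp: mono_maps_def order_pres_def PiE_def Pi_def)
qed

lemma mono_maps_pop:
  assumes "f \<in> mono_maps Q (Suc m)"
  shows "{x \<in> Q. f x = 0} \<in> down_sets Q"
    and "restrict (\<lambda>x. f x - 1) (Q - {x \<in> Q. f x = 0}) \<in> mono_maps (Q - {x \<in> Q. f x = 0}) m"
proof -
  have mono: "f x \<le> f z" if "x \<in> Q" "z \<in> Q" "word_le x z" for x z
    using assms that by (auto simp: mono_maps_def order_pres_def)
  have bound: "f x < Suc m" if "x \<in> Q" for x
    using assms that by (auto simp: mono_maps_def)
  show "{x \<in> Q. f x = 0} \<in> down_sets Q"
    using mono by (fastforce simp: down_sets_def)
  show "restrict (\<lambda>x. f x - 1) (Q - {x \<in> Q. f x = 0}) \<in> mono_maps (Q - {x \<in> Q. f x = 0}) m"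
    unfolding mono_maps_def order_pres_def
  proof (intro CollectI conjI ballI impI PiE_I)
    fix x assume "x \<in> Q - {x \<in> Q. f x = 0}"
    then show "restrict (\<lambda>x. f x - 1) (Q - {x \<in> Q. f x = 0}) x \<in> {..<m}"
      using bound[of x] by auto
  next
    fix x z assume "x \<in> Q - {x \<in> Q. f x = 0}" "z \<in> Q - {x \<in> Q. f x = 0}" "word_le x z"
    then show "restrict (\<lambda>x. f x - 1) (Q - {x \<in> Q. f x = 0}) x
        \<le> restrict (\<lambda>x. f x - 1) (Q - {x \<in> Q. f x = 0}) z"
      using mono[of x z] by auto
  qed simp
qed

lemma sum_mono_maps_Suc:
  assumes "finite Q"
  shows "(\<Sum>Q1\<in>down_sets Q. \<Sum>h\<in>mono_maps (Q - Q1) m.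
            (\<Sum>L\<in>lin_exts Q1. y (map g L)) * (\<Prod>l<m. block_sum y g (Q - Q1) h l))
       = (\<Sum>f\<in>mono_maps Q (Suc m). \<Prod>l<Suc m. block_sum y g Q f l)"
proof -
  let ?push = "\<lambda>(Q1, h). restrict (\<lambda>x. if x \<in> Q1 then 0 else Suc (h x)) Q"
  let ?pop = "\<lambda>f. ({x \<in> Q. f x = 0}, restrict (\<lambda>x. f x - 1) (Q - {x \<in> Q. f x = 0}))"
  have "(\<Sum>Q1\<in>down_sets Q. \<Sum>h\<in>mono_maps (Q - Q1) m.
            (\<Sum>L\<in>lin_exts Q1. y (map g L)) * (\<Prod>l<m. block_sum y g (Q - Q1) h l))
      = (\<Sum>(Q1, h)\<in>Sigma (down_sets Q) (\<lambda>Q1. mono_maps (Q - Q1) m).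
            (\<Sum>L\<in>lin_exts Q1. y (map g L)) * (\<Prod>l<m. block_sum y g (Q - Q1) h l))"
    using finite_down_sets[OF assms] finite_mono_maps assms by (intro sum.Sigma) auto
  also have "\<dots> = (\<Sum>f\<in>mono_maps Q (Suc m). \<Prod>l<Suc m. block_sum y g Q f l)"
  proof (rule sum.reindex_bij_witness[where i = ?pop and j = ?push])
    fix t assume "t \<in> Sigma (down_sets Q) (\<lambda>Q1. mono_maps (Q - Q1) m)"
    then obtain Q1 h where t: "t = (Q1, h)" "Q1 \<in> down_sets Q" "h \<in> mono_maps (Q - Q1) m"
      by auto
    have sub: "Q1 \<subseteq> Q" using t(2) by (simp add: down_sets_def)
    have h_ext: "h x = undefined" if "x \<notin> Q - Q1" for x
      using t(3) that by (auto simp: mono_maps_def)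
    show "?pop (?push t) = t"
      using t(1) sub h_ext by (auto simp: restrict_def)
    show "?push t \<in> mono_maps Q (Suc m)"
      using mono_maps_push[OF t(2,3)] t(1) by simp
    have "{x \<in> Q. ?push t x = 0} = Q1" "{x \<in> Q. ?push t x = Suc l} = {x \<in> Q - Q1. h x = l}" for l
      using t(1) sub by auto
    then show "(\<Prod>l<Suc m. block_sum y g Q (?push t) l)
        = (case t of (Q1, h) \<Rightarrow> (\<Sum>L\<in>lin_exts Q1. y (map g L)) * (\<Prod>l<m. block_sum y g (Q - Q1) h l))"
      unfolding prod.lessThan_Suc_shift using t(1) by (simp add: block_sum_def)
  next
    fix f assume f: "f \<in> mono_maps Q (Suc m)"
    then show "?pop f \<in> Sigma (down_sets Q) (\<lambda>Q1. mono_maps (Q - Q1) m)"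
      using mono_maps_pop by simp
    have "f x = undefined" if "x \<notin> Q" for x
      using f that by (auto simp: mono_maps_def)
    then show "?push (?pop f) = f" by (auto simp: restrict_def)
  qed
  finally show ?thesis .
qed

text \<open>The tensor power splits a linear extension into consecutive pieces; recording which piece each
  element falls into gives a monotone map, whose fibres are then enumerated independently.\<close>
lemma sum_lin_exts_tpow:
  assumes "finite Q"
  shows "(\<Sum>L\<in>lin_exts Q. tpow y m (map g L)) = (\<Sum>f\<in>mono_maps Q m. \<Prod>l<m. block_sum y g Q f l)"
  using assms
proof (induction m arbitrary: Q)
  case 0
  show ?case
  proof (cases "Q = {}")
    case True
    then show ?thesis by (simp add: mono_maps_def order_pres_def lin_exts_empty ew_def)
  next
    case False
    then have "L \<noteq> []" if "L \<in> lin_exts Q" for L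
      using that by (auto simp: lin_exts_def)
    moreover have "mono_maps Q 0 = {}"
      using False by (auto simp: mono_maps_def PiE_iff)
    ultimately show ?thesis by (simp add: ew_def)
  qed
next
  case (Suc m)
  have "(\<Sum>L\<in>lin_exts Q. tpow y (Suc m) (map g L))
      = (\<Sum>L\<in>lin_exts Q. \<Sum>i\<le>length L. y (map g (take i L)) * tpow y m (map g (drop i L)))"
    by (simp add: tmul_def take_map drop_map)
  also have "\<dots> = (\<Sum>Q1\<in>down_sets Q. \<Sum>L1\<in>lin_exts Q1. \<Sum>L2\<in>lin_exts (Q - Q1).
                    y (map g L1) * tpow y m (map g L2))"
    by (rule sum_lin_exts_split[OF Suc.prems])
  also have "\<dots> = (\<Sum>Q1\<in>down_sets Q.
                    (\<Sum>L\<in>lin_exts Q1. y (map g L)) * (\<Sum>L\<in>lin_exts (Q - Q1). tpow y m (map g L)))"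
    by (simp add: sum_product)
  also have "\<dots> = (\<Sum>Q1\<in>down_sets Q. \<Sum>h\<in>mono_maps (Q - Q1) m.
                    (\<Sum>L\<in>lin_exts Q1. y (map g L)) * (\<Prod>l<m. block_sum y g (Q - Q1) h l))"
    using Suc by (simp add: sum_distrib_left)
  finally show ?case by (simp only: sum_mono_maps_Suc[OF Suc.prems])
qed

definition surj_mono_maps :: "(nat \<times> nat) set \<Rightarrow> nat \<Rightarrow> (nat \<times> nat \<Rightarrow> nat) set" where
  "surj_mono_maps Q m = {f \<in> mono_maps Q m. f ` Q = {..<m}}"

lemma is_poly_ew: "is_word d w \<Longrightarrow> is_poly d (ew w)"
  unfolding is_poly_def is_series_def tsupp_ew by (auto simp: ew_def)

lemma is_poly_shuffle_ew:
  assumes "\<forall>w\<in>set ws. is_word d w"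
  shows "is_poly d (foldr tshuffle (map ew ws) (ew []))"
  unfolding foldr_tshuffle_ew is_poly_def is_series_def tsupp_count
proof (intro conjI allI impI)
  fix \<tau> assume "\<not> is_word d \<tau>"
  then have "\<tau> \<notin># shuffle_mset_list ws"
    using set_mset_shuffle_mset_list[of \<tau> ws] assms by (auto simp: is_word_def)
  then show "real (count (shuffle_mset_list ws) \<tau>) = 0" by (simp add: not_in_iff)
qed simp

lemma tpair_shuffle_ew_character:
  assumes hom: "\<forall>f g. is_poly d f \<and> is_poly d g \<longrightarrow> tpair x (tshuffle f g) = tpair x f * tpair x g"
    and unit: "x [] = 1" and words: "\<forall>w\<in>set ws. is_word d w"
  shows "tpair x (foldr tshuffle (map ew ws) (ew [])) = prod_list (map x ws)"
  using words
proof (induction ws)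
  case (Cons w ws)
  then have "tpair x (tshuffle (ew w) (foldr tshuffle (map ew ws) (ew [])))
      = x w * tpair x (foldr tshuffle (map ew ws) (ew []))"
    using hom is_poly_ew is_poly_shuffle_ew by (simp add: tpair_ew)
  then show ?case using Cons by simp
qed (simp add: unit tpair_ew)

lemma tpow_eq_0_if_length_less:
  assumes "y [] = 0" "length w < m"
  shows "tpow y m w = 0"
  using assms(2)
proof (induction m arbitrary: w)
  case (Suc m)
  have "y (take i w) * tpow y m (drop i w) = 0" if "i \<le> length w" for i
    using assms(1) Suc that by (cases "i = 0") auto
  then show ?case unfolding tpow.simps tmul_def by (intro sum.neutral) simp
qed simp

lemma finite_word_poset: "finite (word_poset ts)"
proof -
  have "word_poset ts = (SIGMA j:{..<length ts}. {..<length (ts ! j)})"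
    by (auto simp: word_poset_def)
  then show ?thesis by simp
qed

lemma fst_word_poset: "x \<in> word_poset ts \<Longrightarrow> fst x < length ts"
  by (auto simp: word_poset_def)

lemma is_word_map_letter:
  assumes "\<forall>\<tau>\<in>set ts. is_word d \<tau>" "set L \<subseteq> word_poset ts"
  shows "is_word d (map (letter ts) L)"
proof -
  have "letter ts x \<in> set (ts ! fst x)" if "x \<in> word_poset ts" for x
    using that by (auto simp: word_poset_def letter_def)
  moreover have "ts ! fst x \<in> set ts" if "x \<in> word_poset ts" for x
    using that by (auto simp: word_poset_def)
  ultimately show ?thesis using assms by (fastforce simp: is_word_def)
qed

lemma is_word_subword:
  assumes "\<forall>\<tau>\<in>set ts. is_word d \<tau>" "Q \<subseteq> word_poset ts"
  shows "is_word d (subword ts Q j)"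
  unfolding subword_eq_map_letter
  using assms finite_subset[OF assms(2) finite_word_poset]
    by (intro is_word_map_letter) (auto simp: set_word_chain)

lemma is_chain_word: "is_chain Q word_le {x \<in> Q. fst x = j}"
  by (auto simp: is_chain_def word_le_def)

lemma is_chain_word_le_fst:
  assumes "is_chain Q word_le C" "x \<in> C" "y \<in> C"
  shows "fst x = fst y"
proof -
  have "word_le x y \<or> word_le y x" using assms unfolding is_chain_def by blast
  then show ?thesis by (auto simp: word_le_def)
qed

section \<open>Moments from cumulants\<close>

text \<open>The M\<ouml>bius function of the partition lattice, between a partition with n blocks and the
  one-block partition.\<close>
definition partition_moebius :: "nat \<Rightarrow> real" where
  "partition_moebius n = (-1) ^ (n - 1) * fact (n - 1)"

definition cumulant_of :: "('i set \<Rightarrow> real) \<Rightarrow> 'i set \<Rightarrow> real" where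
  "cumulant_of E A = (\<Sum>\<sigma>\<in>{\<sigma>. partition_on A \<sigma>}. partition_moebius (card \<sigma>) * (\<Prod>C\<in>\<sigma>. E C))"

lemma joint_cumulant_eq_cumulant_of:
  "joint_cumulant M J Y = cumulant_of (\<lambda>C. integral\<^sup>L M (\<lambda>\<omega>. \<Prod>i\<in>C. Y i \<omega>)) J"
  by (simp add: joint_cumulant_def cumulant_of_def partition_moebius_def)

lemma cumulant_of_cong:
  assumes "\<And>C. C \<subseteq> A \<Longrightarrow> E1 C = E2 C"
  shows "cumulant_of E1 A = cumulant_of E2 A"
  unfolding cumulant_of_def
proof (intro sum.cong refl arg_cong2[where f = "(*)"] prod.cong)
  fix \<sigma> C assume "\<sigma> \<in> {\<sigma>. partition_on A \<sigma>}" "C \<in> \<sigma>"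
  then show "E1 C = E2 C" using assms by (auto simp: partition_on_def)
qed

lemma partition_on_block_unique:
  assumes "partition_on J \<tau>" "A \<in> \<tau>" "B \<in> \<tau>" "x \<in> A" "x \<in> B"
  shows "A = B"
  using assms partition_onD2[OF assms(1)] unfolding disjoint_def by blast

definition block_of :: "'a set set \<Rightarrow> 'a \<Rightarrow> 'a set" where
  "block_of \<pi> x = (THE A. A \<in> \<pi> \<and> x \<in> A)"

lemma block_of_eq:
  assumes "partition_on J \<pi>" "A \<in> \<pi>" "x \<in> A"
  shows "block_of \<pi> x = A"
  unfolding block_of_def
  by (rule the_equality) (use assms partition_on_block_unique[OF assms(1)] in blast)+

lemma block_of:
  assumes "partition_on J \<pi>" "x \<in> J"
  shows "block_of \<pi> x \<in> \<pi>" "x \<in> block_of \<pi> x"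
proof -
  have "x \<in> \<Union>\<pi>" using assms by (simp add: partition_on_def)
  then obtain A where "A \<in> \<pi>" "x \<in> A" by blast
  then show "block_of \<pi> x \<in> \<pi>" "x \<in> block_of \<pi> x" using block_of_eq[OF assms(1)] by simp_all
qed

lemma partition_on_insert_block:
  assumes "partition_on (J - B) \<pi>" "B \<subseteq> J" "B \<noteq> {}"
  shows "partition_on J (insert B \<pi>)" "B \<notin> \<pi>"
proof -
  have "\<Union>\<pi> = J - B" using assms(1) by (simp add: partition_on_def)
  then show "partition_on J (insert B \<pi>)" "B \<notin> \<pi>"
    using assms by (auto simp: partition_on_insert disjnt_def)
qed

lemma partition_on_remove_block:
  assumes "partition_on J \<tau>" "D \<in> \<tau>"
  shows "partition_on (J - D) (\<tau> - {D})"
proof -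
  have "disjnt D (\<Union>(\<tau> - {D}))"
    using assms partition_onD2[OF assms(1)] by (auto simp: disjnt_def pairwise_def disjoint_def)
  moreover have "insert D (\<tau> - {D}) = \<tau>" using assms(2) by blast
  ultimately show ?thesis using assms(1) partition_on_insert[of D "\<tau> - {D}" J] by simp
qed

lemma sum_partitions_split_block:
  fixes h :: "'i set \<Rightarrow> real"
  assumes fin: "finite J" and x: "x \<in> J"
  shows "(\<Sum>\<pi>\<in>{\<pi>. partition_on J \<pi>}. \<Prod>A\<in>\<pi>. h A)
       = (\<Sum>A\<in>{A. A \<subseteq> J \<and> x \<in> A}. h A * (\<Sum>\<pi>\<in>{\<pi>. partition_on (J - A) \<pi>}. \<Prod>B\<in>\<pi>. h B))"
proof -
  have "(\<Sum>A\<in>{A. A \<subseteq> J \<and> x \<in> A}. h A * (\<Sum>\<pi>\<in>{\<pi>. partition_on (J - A) \<pi>}. \<Prod>B\<in>\<pi>. h B))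
      = (\<Sum>(A, \<pi>)\<in>Sigma {A. A \<subseteq> J \<and> x \<in> A} (\<lambda>A. {\<pi>. partition_on (J - A) \<pi>}). h A * (\<Prod>B\<in>\<pi>. h B))"
    using fin by (simp add: sum_distrib_left sum.Sigma finitely_many_partition_on)
  also have "\<dots> = (\<Sum>\<pi>\<in>{\<pi>. partition_on J \<pi>}. \<Prod>A\<in>\<pi>. h A)"
  proof (rule sum.reindex_bij_witness[where j = "\<lambda>(A, \<pi>). insert A \<pi>"
        and i = "\<lambda>\<pi>. (block_of \<pi> x, \<pi> - {block_of \<pi> x})"])
    fix t assume "t \<in> Sigma {A. A \<subseteq> J \<and> x \<in> A} (\<lambda>A. {\<pi>. partition_on (J - A) \<pi>})"
    then obtain A \<pi> where t: "t = (A, \<pi>)" "A \<subseteq> J" "x \<in> A" "partition_on (J - A) \<pi>" by auto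
    then have part: "partition_on J (insert A \<pi>)" and new: "A \<notin> \<pi>"
      using partition_on_insert_block[OF t(4) t(2)] by auto
    have "block_of (insert A \<pi>) x = A" using block_of_eq[OF part] t(3) by simp
    then show "(\<lambda>\<pi>. (block_of \<pi> x, \<pi> - {block_of \<pi> x})) ((\<lambda>(A, \<pi>). insert A \<pi>) t) = t"
      using t(1) new by auto
    show "(\<lambda>(A, \<pi>). insert A \<pi>) t \<in> {\<pi>. partition_on J \<pi>}" using part t(1) by simp
    have "finite \<pi>" using finite_elements[OF _ t(4)] fin by simp
    then show "(\<Prod>B\<in>(\<lambda>(A, \<pi>). insert A \<pi>) t. h B) = (case t of (A, \<pi>) \<Rightarrow> h A * (\<Prod>B\<in>\<pi>. h B))"
      using t(1) new by simp
  next
    fix \<pi> assume "\<pi> \<in> {\<pi>. partition_on J \<pi>}"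
    then have part: "partition_on J \<pi>" by simp
    then show "(\<lambda>(A, \<pi>). insert A \<pi>) ((\<lambda>\<pi>. (block_of \<pi> x, \<pi> - {block_of \<pi> x})) \<pi>) = \<pi>"
      using block_of[OF part x] by auto
    have "block_of \<pi> x \<subseteq> J" using block_of[OF part x] part by (auto simp: partition_on_def)
    then show "(\<lambda>\<pi>. (block_of \<pi> x, \<pi> - {block_of \<pi> x})) \<pi>
        \<in> Sigma {A. A \<subseteq> J \<and> x \<in> A} (\<lambda>A. {\<pi>. partition_on (J - A) \<pi>})"
      using block_of[OF part x] partition_on_remove_block[OF part, of "block_of \<pi> x"] by simp
  qed
  finally show ?thesis by simp
qed

lemma sum_partitions_proper_subsets:
  fixes f :: "'i set set \<Rightarrow> 'i set \<Rightarrow> real"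
  assumes fin: "finite J" and x: "x \<in> J"
  shows "(\<Sum>A\<in>{A. A \<subseteq> J \<and> x \<in> A \<and> A \<noteq> J}. \<Sum>\<sigma>\<in>{\<sigma>. partition_on A \<sigma>}. f \<sigma> (J - A))
       = (\<Sum>\<tau>\<in>{\<tau>. partition_on J \<tau>}. \<Sum>D\<in>{D \<in> \<tau>. x \<notin> D}. f (\<tau> - {D}) D)"
proof -
  let ?SA = "{A. A \<subseteq> J \<and> x \<in> A \<and> A \<noteq> J}"
  let ?PJ = "{\<tau>. partition_on J \<tau>}"
  have "(\<Sum>A\<in>?SA. \<Sum>\<sigma>\<in>{\<sigma>. partition_on A \<sigma>}. f \<sigma> (J - A))
      = (\<Sum>(A, \<sigma>)\<in>Sigma ?SA (\<lambda>A. {\<sigma>. partition_on A \<sigma>}). f \<sigma> (J - A))"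
    using fin by (intro sum.Sigma) (auto intro: finitely_many_partition_on finite_subset)
  also have "\<dots> = (\<Sum>(\<tau>, D)\<in>Sigma ?PJ (\<lambda>\<tau>. {D \<in> \<tau>. x \<notin> D}). f (\<tau> - {D}) D)"
  proof (rule sum.reindex_bij_witness[where j = "\<lambda>(A, \<sigma>). (insert (J - A) \<sigma>, J - A)"
        and i = "\<lambda>(\<tau>, D). (J - D, \<tau> - {D})"])
    fix t assume "t \<in> Sigma ?SA (\<lambda>A. {\<sigma>. partition_on A \<sigma>})"
    then obtain A \<sigma> where t: "t = (A, \<sigma>)" "A \<subseteq> J" "x \<in> A" "A \<noteq> J" "partition_on A \<sigma>" by auto
    have "J - (J - A) = A" using t(2) by blast
    then have "partition_on J (insert (J - A) \<sigma>)" "J - A \<notin> \<sigma>"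
      using partition_on_insert_block[of J "J - A" \<sigma>] t by auto
    then show "(\<lambda>(\<tau>, D). (J - D, \<tau> - {D})) ((\<lambda>(A, \<sigma>). (insert (J - A) \<sigma>, J - A)) t) = t"
      and "(\<lambda>(A, \<sigma>). (insert (J - A) \<sigma>, J - A)) t \<in> Sigma ?PJ (\<lambda>\<tau>. {D \<in> \<tau>. x \<notin> D})"
      and "(\<lambda>(\<tau>, D). f (\<tau> - {D}) D) ((\<lambda>(A, \<sigma>). (insert (J - A) \<sigma>, J - A)) t)
         = (\<lambda>(A, \<sigma>). f \<sigma> (J - A)) t"
      using t \<open>J - (J - A) = A\<close> by auto
  next
    fix u assume "u \<in> Sigma ?PJ (\<lambda>\<tau>. {D \<in> \<tau>. x \<notin> D})"
    then obtain \<tau> D where u: "u = (\<tau>, D)" "partition_on J \<tau>" "D \<in> \<tau>" "x \<notin> D" by auto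
    have "D \<subseteq> J" "D \<noteq> {}" using u(2,3) by (auto simp: partition_on_def)
    then show "(\<lambda>(A, \<sigma>). (insert (J - A) \<sigma>, J - A)) ((\<lambda>(\<tau>, D). (J - D, \<tau> - {D})) u) = u"
      and "(\<lambda>(\<tau>, D). (J - D, \<tau> - {D})) u \<in> Sigma ?SA (\<lambda>A. {\<sigma>. partition_on A \<sigma>})"
      using u x partition_on_remove_block[OF u(2,3)]
        by (auto simp: Diff_Diff_Int inf.absorb2 insert_absorb)
  qed
  also have "\<dots> = (\<Sum>\<tau>\<in>?PJ. \<Sum>D\<in>{D \<in> \<tau>. x \<notin> D}. f (\<tau> - {D}) D)"
    using finitely_many_partition_on[OF fin] finite_elements[OF fin] by (intro sum.Sigma[symmetric]) auto
  finally show ?thesis .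
qed

lemma card_blocks_avoiding:
  assumes "partition_on J \<tau>" "x \<in> J" "finite J"
  shows "card {D \<in> \<tau>. x \<notin> D} = card \<tau> - 1"
proof -
  obtain B where B: "B \<in> \<tau>" "x \<in> B" using assms by (auto simp: partition_on_def)
  then have "{D \<in> \<tau>. x \<notin> D} = \<tau> - {B}" using partition_on_block_unique[OF assms(1) B(1)] by blast
  moreover have "finite \<tau>" using finite_elements[OF assms(3,1)] .
  ultimately show ?thesis using B by simp
qed

lemma partition_moebius_telescope:
  "n \<ge> 1 \<Longrightarrow> partition_moebius n + real (n - 1) * partition_moebius (n - 1) = (if n = 1 then 1 else 0)"
  by (cases n rule: nat.exhaust[case_product nat.exhaust[of "n - 1"]])
    (auto simp: partition_moebius_def fact_Suc algebra_simps)

lemma sum_partitions_telescope: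
  fixes E :: "'i set \<Rightarrow> real"
  assumes fin: "finite J" and "J \<noteq> {}"
  shows "(\<Sum>\<tau>\<in>{\<tau>. partition_on J \<tau>}.
            (partition_moebius (card \<tau>) + real (card \<tau> - 1) * partition_moebius (card \<tau> - 1))
            * (\<Prod>C\<in>\<tau>. E C)) = E J"
proof -
  have "(partition_moebius (card \<tau>) + real (card \<tau> - 1) * partition_moebius (card \<tau> - 1))
          * (\<Prod>C\<in>\<tau>. E C) = (if \<tau> = {J} then E J else 0)" if \<tau>: "partition_on J \<tau>" for \<tau>
  proof -
    have "\<tau> \<noteq> {}" using \<tau> assms(2) by (auto simp: partition_on_def)
    then have "card \<tau> \<ge> 1" using finite_elements[OF fin \<tau>] by (simp add: Suc_le_eq card_gt_0_iff)
    moreover have "card \<tau> = 1 \<longleftrightarrow> \<tau> = {J}"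
      using \<tau> assms(2) by (auto simp: card_Suc_eq partition_on_def)
    ultimately show ?thesis using partition_moebius_telescope[of "card \<tau>"] by auto
  qed
  then have "(\<Sum>\<tau>\<in>{\<tau>. partition_on J \<tau>}.
            (partition_moebius (card \<tau>) + real (card \<tau> - 1) * partition_moebius (card \<tau> - 1))
            * (\<Prod>C\<in>\<tau>. E C)) = (\<Sum>\<tau>\<in>{\<tau>. partition_on J \<tau>}. if \<tau> = {J} then E J else 0)"
    by (intro sum.cong) simp_all
  also have "\<dots> = E J"
    using partition_on_space[OF assms(2)] finitely_many_partition_on[OF fin] by simp
  finally show ?thesis .
qed

lemma sum_proper_subsets_cumulant_of:
  fixes E :: "'i set \<Rightarrow> real"
  assumes fin: "finite J" and x: "x \<in> J"
  shows "(\<Sum>A\<in>{A. A \<subseteq> J \<and> x \<in> A \<and> A \<noteq> J}. cumulant_of E A * E (J - A))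
       = (\<Sum>\<tau>\<in>{\<tau>. partition_on J \<tau>}. real (card \<tau> - 1) * partition_moebius (card \<tau> - 1) * (\<Prod>C\<in>\<tau>. E C))"
proof -
  have "(\<Sum>A\<in>{A. A \<subseteq> J \<and> x \<in> A \<and> A \<noteq> J}. cumulant_of E A * E (J - A))
      = (\<Sum>A\<in>{A. A \<subseteq> J \<and> x \<in> A \<and> A \<noteq> J}. \<Sum>\<sigma>\<in>{\<sigma>. partition_on A \<sigma>}.
           partition_moebius (card \<sigma>) * (\<Prod>C\<in>\<sigma>. E C) * E (J - A))"
    by (simp add: cumulant_of_def sum_distrib_right)
  also have "\<dots> = (\<Sum>\<tau>\<in>{\<tau>. partition_on J \<tau>}. \<Sum>D\<in>{D \<in> \<tau>. x \<notin> D}.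
           partition_moebius (card (\<tau> - {D})) * (\<Prod>C\<in>\<tau> - {D}. E C) * E D)"
    by (rule sum_partitions_proper_subsets[OF fin x])
  also have "\<dots> = (\<Sum>\<tau>\<in>{\<tau>. partition_on J \<tau>}.
      real (card \<tau> - 1) * partition_moebius (card \<tau> - 1) * (\<Prod>C\<in>\<tau>. E C))"
  proof (rule sum.cong[OF refl])
    fix \<tau> assume "\<tau> \<in> {\<tau>. partition_on J \<tau>}"
    then have \<tau>: "partition_on J \<tau>" "finite \<tau>" using finite_elements[OF fin] by auto
    have "partition_moebius (card (\<tau> - {D})) * (\<Prod>C\<in>\<tau> - {D}. E C) * E D
        = partition_moebius (card \<tau> - 1) * (\<Prod>C\<in>\<tau>. E C)" if "D \<in> {D \<in> \<tau>. x \<notin> D}" for D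
      using that \<tau>(2) by (simp add: prod.remove[of \<tau> D] algebra_simps)
    then have "(\<Sum>D\<in>{D \<in> \<tau>. x \<notin> D}. partition_moebius (card (\<tau> - {D})) * (\<Prod>C\<in>\<tau> - {D}. E C) * E D)
        = (\<Sum>D\<in>{D \<in> \<tau>. x \<notin> D}. partition_moebius (card \<tau> - 1) * (\<Prod>C\<in>\<tau>. E C))"
      by (rule sum.cong[OF refl])
    then show "(\<Sum>D\<in>{D \<in> \<tau>. x \<notin> D}. partition_moebius (card (\<tau> - {D})) * (\<Prod>C\<in>\<tau> - {D}. E C) * E D)
        = real (card \<tau> - 1) * partition_moebius (card \<tau> - 1) * (\<Prod>C\<in>\<tau>. E C)"
      using card_blocks_avoiding[OF \<tau>(1) x fin] by simp
  qed
  finally show ?thesis .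
qed

lemma sum_cumulant_of_mul_complement:
  fixes E :: "'i set \<Rightarrow> real"
  assumes fin: "finite J" and x: "x \<in> J"
  shows "(\<Sum>A\<in>{A. A \<subseteq> J \<and> x \<in> A}. cumulant_of E A * (if J - A = {} then 1 else E (J - A))) = E J"
proof -
  let ?SA = "{A. A \<subseteq> J \<and> x \<in> A \<and> A \<noteq> J}"
  have "{A. A \<subseteq> J \<and> x \<in> A} = insert J ?SA" "J \<notin> ?SA" using x by auto
  moreover have "(\<Sum>A\<in>?SA. cumulant_of E A * (if J - A = {} then 1 else E (J - A)))
      = (\<Sum>A\<in>?SA. cumulant_of E A * E (J - A))"
    by (rule sum.cong) auto
  ultimately have "(\<Sum>A\<in>{A. A \<subseteq> J \<and> x \<in> A}. cumulant_of E A * (if J - A = {} then 1 else E (J - A)))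
      = cumulant_of E J + (\<Sum>A\<in>?SA. cumulant_of E A * E (J - A))"
    using fin by simp
  also have "\<dots> = (\<Sum>\<tau>\<in>{\<tau>. partition_on J \<tau>}.
            (partition_moebius (card \<tau>) + real (card \<tau> - 1) * partition_moebius (card \<tau> - 1))
            * (\<Prod>C\<in>\<tau>. E C))"
    unfolding sum_proper_subsets_cumulant_of[OF fin x]
    by (simp add: cumulant_of_def sum.distrib algebra_simps)
  also have "\<dots> = E J"
    using x by (intro sum_partitions_telescope[OF fin]) blast
  finally show ?thesis .
qed

theorem sum_partitions_cumulant_of:
  fixes E :: "'i set \<Rightarrow> real"
  assumes "finite J" "J \<noteq> {}"
  shows "(\<Sum>\<pi>\<in>{\<pi>. partition_on J \<pi>}. \<Prod>A\<in>\<pi>. cumulant_of E A) = E J"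
  using assms
proof (induction "card J" arbitrary: J rule: less_induct)
  case less
  obtain x where x: "x \<in> J" using less.prems by blast
  have IH: "cumulant_of E A * (\<Sum>\<pi>\<in>{\<pi>. partition_on (J - A) \<pi>}. \<Prod>B\<in>\<pi>. cumulant_of E B)
      = cumulant_of E A * (if J - A = {} then 1 else E (J - A))" if "A \<in> {A. A \<subseteq> J \<and> x \<in> A}" for A
  proof (cases "J - A = {}")
    case True
    then show ?thesis by (simp only: True) (simp add: partition_on_empty)
  next
    case False
    have "card (J - A) < card J" using that less.prems(1) by (intro psubset_card_mono) auto
    then show ?thesis using less False by simp
  qed
  have "(\<Sum>\<pi>\<in>{\<pi>. partition_on J \<pi>}. \<Prod>A\<in>\<pi>. cumulant_of E A)
      = (\<Sum>A\<in>{A. A \<subseteq> J \<and> x \<in> A}. cumulant_of E A * (if J - A = {} then 1 else E (J - A)))"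
    unfolding sum_partitions_split_block[OF less.prems(1) x] by (rule sum.cong[OF refl IH])
  then show ?case using sum_cumulant_of_mul_complement[OF less.prems(1) x] by simp
qed

lemma kern_eq_image: "kern P f = (\<lambda>x. {z \<in> P. f z = f x}) ` P"
  by (auto simp: kern_def)

lemma kern_cong:
  assumes "\<And>x z. x \<in> P \<Longrightarrow> z \<in> P \<Longrightarrow> g x = g z \<longleftrightarrow> f x = f z"
  shows "kern P g = kern P f"
proof -
  have "{z \<in> P. g z = g x} = {z \<in> P. f z = f x}" if "x \<in> P" for x
    using assms that by auto
  then show ?thesis unfolding kern_eq_image by (auto simp: image_def)
qed

lemma inj_on_fibres: "inj_on (\<lambda>n. {x \<in> P. f x = n}) (f ` P)"
  by (auto simp: inj_on_def)

lemma card_kern: "card (kern P f) = card (f ` P)"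
  unfolding kern_def by (rule card_image[OF inj_on_fibres])

lemma prod_kern: "(\<Prod>B\<in>kern P f. h B) = (\<Prod>n\<in>f ` P. h {x \<in> P. f x = n})"
  unfolding kern_def by (rule prod.reindex[OF inj_on_fibres, unfolded comp_def])

lemma kern_memI: "x \<in> P \<Longrightarrow> {z \<in> P. g z = g x} \<in> kern P g"
  by (auto simp: kern_def)

lemma kern_memD:
  assumes "B \<in> kern P g" "x \<in> B"
  shows "x \<in> P" "B = {z \<in> P. g z = g x}"
  using assms by (auto simp: kern_def)

lemma partition_on_kern: "partition_on P (kern P g)"
  by (rule partition_onI) (auto simp: kern_def disjnt_def)

lemma partition_on_Orp: "a \<in> Orp P le \<Longrightarrow> partition_on P a"
  by (auto simp: Orp_def partition_on_kern)

lemma finite_Orp: "finite P \<Longrightarrow> finite (Orp P le)"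
  by (rule finite_subset[of _ "Pow (Pow P)"]) (auto simp: Orp_def kern_def)

lemma part_fact_eq_card_0_based:
  "part_fact P le a = card {f \<in> P \<rightarrow>\<^sub>E {..<card a}. order_pres P le f \<and> kern P f = a}"
  unfolding part_fact_def
proof (rule bij_betw_same_card[of "\<lambda>f. restrict (\<lambda>x. f x - 1) P"],
       rule bij_betw_byWitness[where f' = "\<lambda>g. restrict (\<lambda>x. Suc (g x)) P"])
  let ?A = "{f \<in> P \<rightarrow>\<^sub>E {1..card a}. order_pres P le f \<and> kern P f = a}"
  let ?B = "{f \<in> P \<rightarrow>\<^sub>E {..<card a}. order_pres P le f \<and> kern P f = a}"
  show "\<forall>f\<in>?A. restrict (\<lambda>x. Suc (restrict (\<lambda>x. f x - 1) P x)) P = f"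
    by (force simp: restrict_def PiE_def Pi_def extensional_def)
  show "\<forall>g\<in>?B. restrict (\<lambda>x. restrict (\<lambda>x. Suc (g x)) P x - 1) P = g"
    by (force simp: restrict_def PiE_def extensional_def)
  show "(\<lambda>f. restrict (\<lambda>x. f x - 1) P) ` ?A \<subseteq> ?B"
  proof (rule image_subsetI)
    fix f assume "f \<in> ?A"
    then have f: "f \<in> P \<rightarrow>\<^sub>E {1..card a}" "order_pres P le f" "a = kern P f" by auto
    have pos: "1 \<le> f x" if "x \<in> P" for x
      using PiE_mem[OF f(1) that] by simp
    have "kern P (restrict (\<lambda>x. f x - 1) P) = kern P f"
    proof (rule kern_cong)
      fix x z assume "x \<in> P" "z \<in> P"
      then show "restrict (\<lambda>x. f x - 1) P x = restrict (\<lambda>x. f x - 1) P z \<longleftrightarrow> f x = f z"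
        using pos[of x] pos[of z] by auto
    qed
    moreover have "order_pres P le (restrict (\<lambda>x. f x - 1) P)"
      using f(2) by (auto simp: order_pres_def diff_le_mono)
    ultimately show "restrict (\<lambda>x. f x - 1) P \<in> ?B"
      using f(1,3) by (force simp: PiE_def Pi_def)
  qed
  show "(\<lambda>g. restrict (\<lambda>x. Suc (g x)) P) ` ?B \<subseteq> ?A"
  proof (rule image_subsetI)
    fix g assume "g \<in> ?B"
    then have g: "g \<in> P \<rightarrow>\<^sub>E {..<card a}" "order_pres P le g" "a = kern P g" by auto
    have "kern P (restrict (\<lambda>x. Suc (g x)) P) = kern P g"
      by (intro kern_cong) simp
    moreover have "order_pres P le (restrict (\<lambda>x. Suc (g x)) P)"
      using g(2) by (auto simp: order_pres_def)
    ultimately show "restrict (\<lambda>x. Suc (g x)) P \<in> ?A"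
      using g(1,3) by (force simp: PiE_def Pi_def)
  qed
qed

lemma Orp_block_subset: "a \<in> Orp P le \<Longrightarrow> B \<in> a \<Longrightarrow> B \<subseteq> P"
  by (drule partition_on_Orp) (auto simp: partition_on_def)

lemma Orp_block_nonempty: "a \<in> Orp P le \<Longrightarrow> B \<in> a \<Longrightarrow> B \<noteq> {}"
  by (drule partition_on_Orp) (auto simp: partition_on_def)

lemma Orp_block_unique: "a \<in> Orp P le \<Longrightarrow> B \<in> a \<Longrightarrow> B' \<in> a \<Longrightarrow> x \<in> B \<Longrightarrow> x \<in> B' \<Longrightarrow> B = B'"
  by (drule partition_on_Orp) (rule partition_on_block_unique)

lemma Orp_cover: "a \<in> Orp P le \<Longrightarrow> x \<in> P \<Longrightarrow> \<exists>B\<in>a. x \<in> B"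
  by (drule partition_on_Orp) (auto simp: partition_on_def)

lemma finite_Orp_blocks: "finite P \<Longrightarrow> a \<in> Orp P le \<Longrightarrow> finite a"
  by (drule partition_on_Orp) (rule finite_elements)

lemma Orp_lex_combination:
  fixes g c :: "'a \<Rightarrow> nat"
  assumes g: "order_pres P le g" and c_bound: "\<forall>x\<in>P. c x < K"
    and c_const: "\<And>x z. x \<in> P \<Longrightarrow> z \<in> P \<Longrightarrow> le x z \<Longrightarrow> g x = g z \<Longrightarrow> c x = c z"
  shows "kern P (\<lambda>x. g x * K + c x) \<in> Orp P le"
    and "x \<in> P \<Longrightarrow> {z \<in> P. g z * K + c z = g x * K + c x} = {z \<in> P. g z = g x \<and> c z = c x}"
proof -
  have eq_iff: "g z * K + c z = g x * K + c x \<longleftrightarrow> g z = g x \<and> c z = c x" if "x \<in> P" "z \<in> P" for x z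
  proof
    assume eq: "g z * K + c z = g x * K + c x"
    have "(g y * K + c y) div K = g y" "(g y * K + c y) mod K = c y" if "y \<in> P" for y
      using c_bound that by auto
    then show "g z = g x \<and> c z = c x" using eq that by metis
  qed simp
  then show "x \<in> P \<Longrightarrow> {z \<in> P. g z * K + c z = g x * K + c x} = {z \<in> P. g z = g x \<and> c z = c x}"
    by blast
  have "g x * K + c x \<le> g z * K + c z" if "x \<in> P" "z \<in> P" "le x z" for x z
  proof (cases "g x = g z")
    case True
    then show ?thesis using c_const[OF that True] by simp
  next
    case False
    moreover have "g x \<le> g z" using g that by (auto simp: order_pres_def)
    ultimately have "Suc (g x) \<le> g z" by simp
    then have "Suc (g x) * K \<le> g z * K" by (rule mult_right_mono) simp
    moreover have "c x < K" using c_bound that(1) by simp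
    ultimately show ?thesis by simp
  qed
  then show "kern P (\<lambda>x. g x * K + c x) \<in> Orp P le"
    unfolding Orp_def order_pres_def by blast
qed

lemma part_fact_eq_card_surj_mono_maps:
  "part_fact Q word_le b = card {f \<in> surj_mono_maps Q (card b). kern Q f = b}"
proof -
  have "f ` Q = {..<card b}" if "f \<in> Q \<rightarrow>\<^sub>E {..<card b}" "kern Q f = b" for f
  proof (rule card_subset_eq)
    show "f ` Q \<subseteq> {..<card b}" using that(1) by (auto simp: PiE_def Pi_def)
    show "card (f ` Q) = card {..<card b}" using that(2) card_kern[of Q f] by simp
  qed simp
  then have "{f \<in> Q \<rightarrow>\<^sub>E {..<card b}. order_pres Q word_le f \<and> kern Q f = b}
      = {f \<in> surj_mono_maps Q (card b). kern Q f = b}"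
    by (auto simp: surj_mono_maps_def mono_maps_def)
  then show ?thesis by (simp add: part_fact_eq_card_0_based)
qed

lemma surj_mono_maps_kern:
  assumes "f \<in> surj_mono_maps Q m"
  shows "kern Q f \<in> Orp Q word_le" "card (kern Q f) = m"
    and "(\<Prod>B\<in>kern Q f. h B) = (\<Prod>l<m. h {x \<in> Q. f x = l})"
  using assms by (auto simp: surj_mono_maps_def mono_maps_def Orp_def card_kern prod_kern)

lemma finite_surj_mono_maps: "finite Q \<Longrightarrow> finite (surj_mono_maps Q m)"
  unfolding surj_mono_maps_def by (simp add: finite_mono_maps)

lemma sum_Orp_eq_sum_surj_mono_maps_by_card:
  assumes fin: "finite Q" and nonempty: "Q \<noteq> {}"
  shows "(\<Sum>b\<in>Orp Q word_le. \<Sum>f\<in>{f \<in> surj_mono_maps Q (card b). kern Q f = b}. G (card b) f)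
       = (\<Sum>m\<in>{1..card Q}. \<Sum>f\<in>surj_mono_maps Q m. G m f)"
proof -
  let ?S = "\<lambda>b. {f \<in> surj_mono_maps Q (card b). kern Q f = b}"
  have "(\<Sum>b\<in>Orp Q word_le. \<Sum>f\<in>?S b. G (card b) f) = (\<Sum>(b, f)\<in>Sigma (Orp Q word_le) ?S. G (card b) f)"
    using finite_Orp[OF fin] finite_surj_mono_maps[OF fin] by (intro sum.Sigma) auto
  also have "\<dots> = (\<Sum>(m, f)\<in>Sigma {1..card Q} (surj_mono_maps Q). G m f)"
  proof (rule sum.reindex_bij_witness[where j = "\<lambda>(b, f). (card b, f)" and i = "\<lambda>(m, f). (kern Q f, f)"])
    fix t assume "t \<in> Sigma (Orp Q word_le) ?S"
    then obtain b f where t: "t = (b, f)" "f \<in> surj_mono_maps Q (card b)" "kern Q f = b" by auto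
    have "card b = card (f ` Q)" using t(3) card_kern[of Q f] by simp
    then have "1 \<le> card b" "card b \<le> card Q"
      using nonempty fin card_image_le[OF fin, of f] by (auto simp: Suc_le_eq card_gt_0_iff)
    then show "(\<lambda>(m, f). (kern Q f, f)) ((\<lambda>(b, f). (card b, f)) t) = t"
      and "(\<lambda>(b, f). (card b, f)) t \<in> Sigma {1..card Q} (surj_mono_maps Q)"
      using t by auto
  next
    fix s assume "s \<in> Sigma {1..card Q} (surj_mono_maps Q)"
    then obtain m f where s: "s = (m, f)" "f \<in> surj_mono_maps Q m" by auto
    then show "(\<lambda>(b, f). (card b, f)) ((\<lambda>(m, f). (kern Q f, f)) s) = s"
      and "(\<lambda>(m, f). (kern Q f, f)) s \<in> Sigma (Orp Q word_le) ?S"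
      using surj_mono_maps_kern[OF s(2)] by auto
  qed auto
  also have "\<dots> = (\<Sum>m\<in>{1..card Q}. \<Sum>f\<in>surj_mono_maps Q m. G m f)"
    using finite_surj_mono_maps[OF fin] by (simp add: sum.Sigma)
  finally show ?thesis .
qed

locale random_rough_path =
  fixes M :: "'w measure" and X :: "'w \<Rightarrow> real \<times> real \<Rightarrow> nat list \<Rightarrow> real"
    and d :: nat and p T :: real and ts :: "nat list list"
  assumes prob: "prob_space M" and T_nonneg: "0 \<le> T"
    and rough_path: "\<forall>\<omega>\<in>space M. X \<omega> \<in> wg_rough_paths d p T"
    and integrable_coord: "\<forall>\<sigma>. is_word d \<sigma> \<longrightarrow> integrable M (\<lambda>\<omega>. X \<omega> (0, T) \<sigma>)"
    and words: "\<forall>\<tau>\<in>set ts. \<tau> \<noteq> [] \<and> is_word d \<tau>"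
    and ts_nonempty: "ts \<noteq> []"
begin

abbreviation P where "P \<equiv> word_poset ts"

definition word_indices :: "(nat \<times> nat) set \<Rightarrow> nat set" where
  "word_indices Q = {j. j < length ts \<and> {q. (j, q) \<in> Q} \<noteq> {}}"

definition moment :: "(nat \<times> nat) set \<Rightarrow> real" where
  "moment Q = integral\<^sup>L M (\<lambda>\<omega>. \<Prod>j\<in>word_indices Q. X \<omega> (0, T) (subword ts Q j))"

lemma signature_character:
  assumes "\<omega> \<in> space M"
  shows "X \<omega> (0, T) [] = 1"
    and "\<forall>f g. is_poly d f \<and> is_poly d g \<longrightarrow>
           tpair (X \<omega> (0, T)) (tshuffle f g) = tpair (X \<omega> (0, T)) f * tpair (X \<omega> (0, T)) g"
proof -
  have "X \<omega> \<in> wg_rough_paths d p T" using rough_path assms by blast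
  then have "X \<omega> (0, T) [] = 1 \<and> (\<forall>f g. is_poly d f \<and> is_poly d g \<longrightarrow>
           tpair (X \<omega> (0, T)) (tshuffle f g) = tpair (X \<omega> (0, T)) f * tpair (X \<omega> (0, T)) g)"
    unfolding wg_rough_paths_def using T_nonneg by blast
  then show "X \<omega> (0, T) [] = 1"
    and "\<forall>f g. is_poly d f \<and> is_poly d g \<longrightarrow>
           tpair (X \<omega> (0, T)) (tshuffle f g) = tpair (X \<omega> (0, T)) f * tpair (X \<omega> (0, T)) g"
    by blast+
qed

lemma words_in_alphabet: "\<forall>\<tau>\<in>set ts. is_word d \<tau>"
  using words by blast

lemma sum_lin_exts_signature:
  assumes Q: "Q \<subseteq> P" and \<omega>: "\<omega> \<in> space M"
  shows "(\<Sum>L\<in>lin_exts Q. X \<omega> (0, T) (map (letter ts) L))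
       = (\<Prod>j\<in>word_indices Q. X \<omega> (0, T) (subword ts Q j))"
proof -
  have "(\<Sum>L\<in>lin_exts Q. X \<omega> (0, T) (map (letter ts) L))
      = tpair (X \<omega> (0, T)) (foldr tshuffle (map ew (subwords ts Q)) (ew []))"
    using finite_subset[OF Q finite_word_poset] Q fst_word_poset
    by (intro tpair_shuffle_subwords[symmetric]) auto
  also have "\<dots> = prod_list (map (X \<omega> (0, T)) (subwords ts Q))"
    using signature_character[OF \<omega>] is_word_subword[OF words_in_alphabet Q]
    by (intro tpair_shuffle_ew_character) (auto simp: subwords_def)
  also have "\<dots> = (\<Prod>j\<in>{0..<length ts}. X \<omega> (0, T) (subword ts Q j))"
    by (simp add: subwords_def prod.distinct_set_conv_list[symmetric] comp_def)
  also have "\<dots> = (\<Prod>j\<in>word_indices Q. X \<omega> (0, T) (subword ts Q j))"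
    using signature_character(1)[OF \<omega>]
    by (intro prod.mono_neutral_right) (auto simp: word_indices_def subword_def)
  finally show ?thesis .
qed

lemma sum_lin_exts_exp_sig:
  assumes "Q \<subseteq> P"
  shows "(\<Sum>L\<in>lin_exts Q. exp_sig M X T (map (letter ts) L)) = moment Q"
proof -
  have "integrable M (\<lambda>\<omega>. X \<omega> (0, T) (map (letter ts) L))" if "L \<in> lin_exts Q" for L
    using integrable_coord is_word_map_letter[OF words_in_alphabet, of L] that assms
    by (auto simp: lin_exts_def)
  then have "(\<Sum>L\<in>lin_exts Q. exp_sig M X T (map (letter ts) L))
      = integral\<^sup>L M (\<lambda>\<omega>. \<Sum>L\<in>lin_exts Q. X \<omega> (0, T) (map (letter ts) L))"
    unfolding exp_sig_def by (simp add: integral_sum)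
  also have "\<dots> = moment Q"
    unfolding moment_def
      by (intro Bochner_Integration.integral_cong refl sum_lin_exts_signature[OF assms])
  finally show ?thesis .
qed

lemma exp_sig_Nil: "exp_sig M X T [] = 1"
proof -
  have "exp_sig M X T [] = integral\<^sup>L M (\<lambda>\<omega>. 1)"
    unfolding exp_sig_def
      by (intro Bochner_Integration.integral_cong refl) (simp add: signature_character)
  then show ?thesis using prob_space.prob_space[OF prob] by simp
qed

section \<open>Expanding the logarithm of the expected signature\<close>

definition exp_sig_minus_unit :: "nat list \<Rightarrow> real" where
  "exp_sig_minus_unit = (\<lambda>\<sigma>. exp_sig M X T \<sigma> - ew [] \<sigma>)"

lemma exp_sig_minus_unit_Nil: "exp_sig_minus_unit [] = 0"
  by (simp add: exp_sig_minus_unit_def exp_sig_Nil ew_def)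

text \<open>Every linear extension of P has length card P, so the log series truncates after card P terms.\<close>
lemma tpair_sig_cumulant_eq_mono_maps:
  "tpair (sig_cumulant M X T) (foldr tshuffle (map ew ts) (ew []))
   = (\<Sum>n<card P. (-1) ^ n / real (Suc n) *
        (\<Sum>f\<in>mono_maps P (Suc n). \<Prod>l<Suc n. block_sum exp_sig_minus_unit (letter ts) P f l))"
proof -
  have fst: "\<forall>x\<in>P. fst x < length ts" using fst_word_poset by blast
  have "tpair (sig_cumulant M X T) (foldr tshuffle (map ew ts) (ew []))
      = (\<Sum>L\<in>lin_exts P. sig_cumulant M X T (map (letter ts) L))"
    using tpair_shuffle_subwords[OF finite_word_poset fst, of "sig_cumulant M X T"]
    by (simp only: subwords_word_poset)
  also have "\<dots> = (\<Sum>L\<in>lin_exts P. \<Sum>n<card P.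
                    (-1) ^ n / real (Suc n) * tpow exp_sig_minus_unit (Suc n) (map (letter ts) L))"
  proof (rule sum.cong[OF refl])
    fix L assume L: "L \<in> lin_exts P"
    show "sig_cumulant M X T (map (letter ts) L)
        = (\<Sum>n<card P. (-1) ^ n / real (Suc n) * tpow exp_sig_minus_unit (Suc n) (map (letter ts) L))"
      unfolding sig_cumulant_def tlog_def exp_sig_minus_unit_def[symmetric]
    proof (rule suminf_finite)
      fix n assume "n \<notin> {..<card P}"
      then have "length (map (letter ts) L) < Suc n" using length_lin_ext[OF L] by simp
      then show "(-1) ^ n / real (Suc n) * tpow exp_sig_minus_unit (Suc n) (map (letter ts) L) = 0"
        by (simp only: tpow_eq_0_if_length_less[where y = exp_sig_minus_unit, OF exp_sig_minus_unit_Nil]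
            mult_zero_right)
    qed simp
  qed
  also have "\<dots> = (\<Sum>n<card P. (-1) ^ n / real (Suc n) *
                    (\<Sum>L\<in>lin_exts P. tpow exp_sig_minus_unit (Suc n) (map (letter ts) L)))"
    unfolding sum_distrib_left by (rule sum.swap)
  finally show ?thesis
    by (simp only: sum_lin_exts_tpow[OF finite_word_poset])
qed

lemma block_sum_eq_moment:
  "block_sum exp_sig_minus_unit (letter ts) P f l
   = (if {x \<in> P. f x = l} = {} then 0 else moment {x \<in> P. f x = l})"
proof (cases "{x \<in> P. f x = l} = {}")
  case True
  then show ?thesis
    by (simp only: block_sum_def True lin_exts_empty) (simp add: exp_sig_minus_unit_Nil)
next
  case False
  have "block_sum exp_sig_minus_unit (letter ts) P f l
      = (\<Sum>L\<in>lin_exts {x \<in> P. f x = l}. exp_sig M X T (map (letter ts) L))"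
    unfolding block_sum_def
  proof (rule sum.cong[OF refl])
    fix L assume "L \<in> lin_exts {x \<in> P. f x = l}"
    then have "L \<noteq> []" using False by (auto simp: lin_exts_def)
    then show "exp_sig_minus_unit (map (letter ts) L) = exp_sig M X T (map (letter ts) L)"
      by (simp add: exp_sig_minus_unit_def ew_def)
  qed
  also have "\<dots> = moment {x \<in> P. f x = l}" by (rule sum_lin_exts_exp_sig) blast
  finally show ?thesis by (simp only: if_not_P[OF False])
qed

lemma prod_block_sums:
  assumes "f \<in> mono_maps P m"
  shows "(\<Prod>l<m. block_sum exp_sig_minus_unit (letter ts) P f l)
       = (if f ` P = {..<m} then (\<Prod>l<m. moment {x \<in> P. f x = l}) else 0)"
proof (cases "f ` P = {..<m}")
  case True
  have "{x \<in> P. f x = l} \<noteq> {}" if "l < m" for l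
  proof -
    have "l \<in> f ` P" using that True by simp
    then show ?thesis by blast
  qed
  then have "block_sum exp_sig_minus_unit (letter ts) P f l = moment {x \<in> P. f x = l}" if "l < m" for l
    using that by (simp only: block_sum_eq_moment if_not_P if_False)
  then show ?thesis using True by simp
next
  case False
  have "f ` P \<subseteq> {..<m}" using assms by (auto simp: mono_maps_def PiE_def Pi_def)
  then obtain l where l: "l < m" "l \<notin> f ` P" using False by blast
  then have "block_sum exp_sig_minus_unit (letter ts) P f l = 0"
    by (auto simp: block_sum_eq_moment)
  then have "(\<Prod>l<m. block_sum exp_sig_minus_unit (letter ts) P f l) = 0"
    using l by (intro prod_zero) auto
  then show ?thesis using False by simp
qed

lemma tpair_sig_cumulant_eq_surj_mono_maps:
  "tpair (sig_cumulant M X T) (foldr tshuffle (map ew ts) (ew []))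
   = (\<Sum>n<card P. \<Sum>f\<in>surj_mono_maps P (Suc n).
        (-1) ^ n / real (Suc n) * (\<Prod>l<Suc n. moment {x \<in> P. f x = l}))"
proof -
  have surj: "(\<Sum>f\<in>mono_maps P m. \<Prod>l<m. block_sum exp_sig_minus_unit (letter ts) P f l)
      = (\<Sum>f\<in>surj_mono_maps P m. \<Prod>l<m. moment {x \<in> P. f x = l})" for m
    unfolding surj_mono_maps_def
    by (simp add: prod_block_sums sum.inter_filter finite_mono_maps[OF finite_word_poset] cong: sum.cong)
  show ?thesis
    unfolding tpair_sig_cumulant_eq_mono_maps surj by (simp only: sum_distrib_left)
qed

lemma word_poset_nonempty: "P \<noteq> {}"
proof -
  have "ts ! 0 \<noteq> []" using words ts_nonempty by auto
  then have "(0, 0) \<in> P" using ts_nonempty by (auto simp: word_poset_def)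
  then show ?thesis by blast
qed

lemma sum_Orp_eq_sum_surj_mono_maps:
  "(\<Sum>b\<in>Orp P word_le.
      (-1) ^ (card b - 1) * real (part_fact P word_le b) / real (card b) * (\<Prod>B\<in>b. moment B))
   = (\<Sum>n<card P. \<Sum>f\<in>surj_mono_maps P (Suc n).
        (-1) ^ n / real (Suc n) * (\<Prod>l<Suc n. moment {x \<in> P. f x = l}))"
proof -
  define G where "G m f = (-1) ^ (m - 1) / real m * (\<Prod>l<m. moment {x \<in> P. f x = l})" for m f
  have "(-1) ^ (card b - 1) * real (part_fact P word_le b) / real (card b) * (\<Prod>B\<in>b. moment B)
      = (\<Sum>f\<in>{f \<in> surj_mono_maps P (card b). kern P f = b}. G (card b) f)" for b
  proof -
    have "G (card b) f = (-1) ^ (card b - 1) / real (card b) * (\<Prod>B\<in>b. moment B)"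
      if "f \<in> {f \<in> surj_mono_maps P (card b). kern P f = b}" for f
      using that surj_mono_maps_kern(3)[of f P "card b" moment] by (auto simp: G_def)
    then show ?thesis by (simp add: part_fact_eq_card_surj_mono_maps)
  qed
  then have "(\<Sum>b\<in>Orp P word_le. (-1) ^ (card b - 1) * real (part_fact P word_le b) / real (card b)
               * (\<Prod>B\<in>b. moment B))
      = (\<Sum>m\<in>{1..card P}. \<Sum>f\<in>surj_mono_maps P m. G m f)"
    by (simp add: sum_Orp_eq_sum_surj_mono_maps_by_card[OF finite_word_poset word_poset_nonempty])
  also have "\<dots> = (\<Sum>n<card P. \<Sum>f\<in>surj_mono_maps P (Suc n). G (Suc n) f)"
    by (simp only: One_nat_def sum.atLeast1_atMost_eq)
  finally show ?thesis by (simp add: G_def)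
qed

section \<open>Cumulants of refined blocks\<close>

definition restrict_words :: "(nat \<times> nat) set \<Rightarrow> nat set \<Rightarrow> (nat \<times> nat) set" where
  "restrict_words B A = {x \<in> B. fst x \<in> A}"

definition block_moment :: "(nat \<times> nat) set \<Rightarrow> nat set \<Rightarrow> real" where
  "block_moment B C = integral\<^sup>L M (\<lambda>\<omega>. \<Prod>j\<in>C. X \<omega> (0, T) (subword ts B j))"

definition index_partitions :: "(nat \<times> nat) set \<Rightarrow> nat set set set" where
  "index_partitions B = {\<pi>. partition_on (word_indices B) \<pi>}"

lemma finite_word_indices: "finite (word_indices B)"
  by (rule finite_subset[of _ "{..<length ts}"]) (auto simp: word_indices_def)

lemma word_indices_nonempty: "B \<subseteq> P \<Longrightarrow> B \<noteq> {} \<Longrightarrow> word_indices B \<noteq> {}"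
  by (auto simp: word_indices_def word_poset_def)

lemma fst_mem_word_indices: "x \<in> B \<Longrightarrow> x \<in> P \<Longrightarrow> fst x \<in> word_indices B"
  by (cases x) (auto simp: word_indices_def word_poset_def)

lemma word_indices_restrict_words: "A \<subseteq> word_indices B \<Longrightarrow> word_indices (restrict_words B A) = A"
  by (auto simp: word_indices_def restrict_words_def)

lemma restrict_words_nonempty: "A \<subseteq> word_indices B \<Longrightarrow> A \<noteq> {} \<Longrightarrow> restrict_words B A \<noteq> {}"
  by (auto simp: restrict_words_def word_indices_def)

lemma moment_eq_sum_index_partitions:
  assumes "B \<subseteq> P" "B \<noteq> {}"
  shows "moment B = (\<Sum>\<pi>\<in>index_partitions B. \<Prod>A\<in>\<pi>. cumulant_of (block_moment B) A)"
  using sum_partitions_cumulant_of[OF finite_word_indices word_indices_nonempty[OF assms],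
      of "block_moment B"]
  by (simp add: moment_def block_moment_def index_partitions_def)

lemma gen_cumulant_eq_prod:
  "gen_cumulant M X T ts a
   = (\<Prod>A\<in>a. joint_cumulant M (word_indices A) (\<lambda>j \<omega>. X \<omega> (0, T) (subword ts A j)))"
  by (simp add: gen_cumulant_def word_indices_def)

lemma joint_cumulant_restrict_words:
  assumes "A \<subseteq> word_indices B"
  shows "joint_cumulant M (word_indices (restrict_words B A))
           (\<lambda>j \<omega>. X \<omega> (0, T) (subword ts (restrict_words B A) j))
         = cumulant_of (block_moment B) A"
  unfolding joint_cumulant_eq_cumulant_of word_indices_restrict_words[OF assms] block_moment_def
  by (rule cumulant_of_cong)
    (auto intro!: Bochner_Integration.integral_cong prod.cong simp: subword_def restrict_words_def)

text \<open>Refining every block B of b by a partition of the words B meets; these are exactly the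
  partitions a with \<open>b \<in> Aset P word_le a\<close>.\<close>
definition refine_blocks ::
    "(nat \<times> nat) set set \<Rightarrow> ((nat \<times> nat) set \<Rightarrow> nat set set) \<Rightarrow> (nat \<times> nat) set set" where
  "refine_blocks b Ch = (\<Union>B\<in>b. restrict_words B ` Ch B)"

lemma refine_blocks_in_Orp:
  assumes b: "b \<in> Orp P word_le" and Ch: "Ch \<in> PiE b index_partitions"
  shows "refine_blocks b Ch \<in> Orp P word_le"
proof -
  obtain g where b_eq: "b = kern P g" and g: "order_pres P word_le g" using b by (auto simp: Orp_def)
  define blk where "blk x = {z \<in> P. g z = g x}" for x
  have part: "partition_on (word_indices B) (Ch B)" if "B \<in> b" for B
    using PiE_mem[OF Ch that] by (simp add: index_partitions_def)
  have blk: "blk x \<in> b" "x \<in> blk x" if "x \<in> P" for x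
    using that kern_memI[OF that, of g] by (auto simp: b_eq blk_def)
  define Ax where "Ax x = block_of (Ch (blk x)) (fst x)" for x
  have Ax_unique: "Ax x = A" if "x \<in> P" "A \<in> Ch (blk x)" "fst x \<in> A" for x A
    using block_of_eq[OF part[OF blk(1)[OF that(1)]] that(2,3)] by (simp add: Ax_def)
  have Ax: "Ax x \<in> Ch (blk x)" "fst x \<in> Ax x" if "x \<in> P" for x
    using block_of[OF part[OF blk(1)[OF that]] fst_mem_word_indices[OF blk(2)[OF that] that]]
    by (simp_all add: Ax_def)
  have Ax_sub: "Ax x \<subseteq> {..<length ts}" "Ax x \<noteq> {}" if "x \<in> P" for x
    using Ax[OF that] part[OF blk(1)[OF that]] by (auto simp: partition_on_def word_indices_def)
  have Min_Ax: "Min (Ax x) \<in> Ax x" "Min (Ax x) < length ts" if "x \<in> P" for x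
  proof -
    show "Min (Ax x) \<in> Ax x" using Ax_sub[OF that] finite_subset[OF Ax_sub(1)[OF that]] by simp
    then show "Min (Ax x) < length ts" using Ax_sub(1)[OF that] by blast
  qed
  have Min_same: "Min (Ax z) = Min (Ax x) \<longleftrightarrow> fst z \<in> Ax x" if "x \<in> P" "z \<in> P" "g z = g x" for x z
  proof
    assume "Min (Ax z) = Min (Ax x)"
    moreover have "Ax z \<in> Ch (blk x)" using Ax(1)[OF that(2)] that(3) by (simp add: blk_def)
    ultimately have "Ax z = Ax x"
      using partition_on_block_unique[OF part[OF blk(1)[OF that(1)]] _ Ax(1)[OF that(1)]]
        Min_Ax(1)[OF that(1)] Min_Ax(1)[OF that(2)] by metis
    then show "fst z \<in> Ax x" using Ax(2)[OF that(2)] by simp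
  next
    assume "fst z \<in> Ax x"
    then have "Ax z = Ax x"
      using Ax_unique[OF that(2), of "Ax x"] Ax(1)[OF that(1)] that(3) by (simp add: blk_def)
    then show "Min (Ax z) = Min (Ax x)" by simp
  qed
  define h where "h x = g x * length ts + Min (Ax x)" for x
  have "Min (Ax x) = Min (Ax z)" if "x \<in> P" "z \<in> P" "word_le x z" "g x = g z" for x z
    using Min_same[OF that(1,2)] Ax(2)[OF that(1)] that(3,4) by (simp add: word_le_def)
  then have h_Orp: "kern P h \<in> Orp P word_le"
    and h_fibre: "\<And>x. x \<in> P \<Longrightarrow> {z \<in> P. h z = h x} = {z \<in> P. g z = g x \<and> Min (Ax z) = Min (Ax x)}"
    using Orp_lex_combination[OF g, of "\<lambda>x. Min (Ax x)" "length ts"] Min_Ax(2) unfolding h_def by auto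
  have fibre: "{z \<in> P. h z = h x} = restrict_words (blk x) (Ax x)" if "x \<in> P" for x
    using h_fibre[OF that] Min_same[OF that] by (auto simp: restrict_words_def blk_def)
  have "kern P h = refine_blocks b Ch"
  proof (intro equalityI subsetI)
    fix C assume "C \<in> kern P h"
    then obtain x where x: "x \<in> P" "C = {z \<in> P. h z = h x}" by (auto simp: kern_eq_image)
    then show "C \<in> refine_blocks b Ch"
      unfolding refine_blocks_def using fibre[OF x(1)] blk(1)[OF x(1)] Ax(1)[OF x(1)] by blast
  next
    fix C assume "C \<in> refine_blocks b Ch"
    then obtain B A where BA: "B \<in> b" "A \<in> Ch B" "C = restrict_words B A"
      by (auto simp: refine_blocks_def)
    have "A \<noteq> {}" "A \<subseteq> word_indices B" using part[OF BA(1)] BA(2) by (auto simp: partition_on_def)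
    then obtain j q where "j \<in> A" "(j, q) \<in> B" by (force simp: word_indices_def)
    then obtain x where x: "x \<in> B" "fst x \<in> A" by force
    have xP: "x \<in> P" and B_eq: "B = blk x"
      using kern_memD[of B P g x] BA(1) x(1) b_eq by (auto simp: blk_def)
    have "Ax x = A" using Ax_unique[OF xP, of A] BA(2) B_eq x(2) by simp
    then have "C = {z \<in> P. h z = h x}" using fibre[OF xP] BA(3) B_eq by simp
    then show "C \<in> kern P h" using xP by (auto simp: kern_eq_image)
  qed
  then show ?thesis using h_Orp by simp
qed

text \<open>On the chain of each word, a and b induce the same partition, so a block of a lying in B
  is recovered from the words it meets.\<close>
lemma Aset_block_eq_restrict_words:
  assumes a: "a \<in> Orp P word_le" and ba: "b \<in> Aset P word_le a"
    and A: "A \<in> a" and B: "B \<in> b" and sub: "A \<subseteq> B"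
  shows "A = restrict_words B (word_indices A)"
proof (intro equalityI subsetI)
  fix x assume x: "x \<in> A"
  then have "fst x \<in> word_indices A" using fst_mem_word_indices Orp_block_subset[OF a A] by blast
  then show "x \<in> restrict_words B (word_indices A)" using x sub by (auto simp: restrict_words_def)
next
  fix x assume "x \<in> restrict_words B (word_indices A)"
  then have xB: "x \<in> B" and "fst x \<in> word_indices A" by (auto simp: restrict_words_def)
  then obtain q where y: "(fst x, q) \<in> A" by (auto simp: word_indices_def)
  have b: "b \<in> Orp P word_le"
    and same_on_chains: "\<And>C. is_chain P word_le C \<Longrightarrow> restr_part b C = restr_part a C"
    using ba unfolding Aset_def by blast+
  define C where "C = {z \<in> P. fst z = fst x}"
  have "(fst x, q) \<in> A \<inter> C" using y Orp_block_subset[OF a A] by (auto simp: C_def)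
  then have "A \<inter> C \<in> restr_part a C" unfolding restr_part_def using A by blast
  then have "A \<inter> C \<in> restr_part b C"
    using same_on_chains[OF is_chain_word[of P "fst x"]] unfolding C_def by simp
  then obtain B' where B': "B' \<in> b" "A \<inter> C = B' \<inter> C" by (auto simp: restr_part_def)
  have "(fst x, q) \<in> B'" using B'(2) \<open>(fst x, q) \<in> A \<inter> C\<close> by blast
  moreover have "(fst x, q) \<in> B" using y sub by blast
  ultimately have "B' = B" by (rule Orp_block_unique[OF b B'(1) B])
  moreover have "x \<in> C" using xB Orp_block_subset[OF b B] by (auto simp: C_def)
  ultimately show "x \<in> A" using B'(2) xB by blast
qed

lemma restr_part_refine_blocks:
  assumes Ch: "Ch \<in> PiE b index_partitions" and C: "is_chain P word_le C"
  shows "restr_part (refine_blocks b Ch) C = restr_part b C"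
proof (cases "C = {}")
  case True
  then show ?thesis by (auto simp: restr_part_def)
next
  case False
  then obtain c0 where c0: "c0 \<in> C" by blast
  have fst_C: "fst x = fst c0" if "x \<in> C" for x using is_chain_word_le_fst[OF C that c0] .
  have "C \<subseteq> P" using C by (simp add: is_chain_def)
  have restrict_C: "restrict_words B A \<inter> C = (if fst c0 \<in> A then B \<inter> C else {})" for B A
    using fst_C by (auto simp: restrict_words_def)
  show ?thesis
  proof (intro equalityI subsetI)
    fix D assume "D \<in> restr_part b C"
    then obtain B where B: "B \<in> b" "D = B \<inter> C" "D \<noteq> {}" by (auto simp: restr_part_def)
    then obtain x where x: "x \<in> B" "x \<in> C" by blast
    have "fst c0 \<in> word_indices B"
      using fst_mem_word_indices[OF x(1)] x(2) \<open>C \<subseteq> P\<close> fst_C[OF x(2)] by auto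
    then obtain A where A: "A \<in> Ch B" "fst c0 \<in> A"
      using PiE_mem[OF Ch B(1)] by (auto simp: index_partitions_def partition_on_def)
    then have "restrict_words B A \<in> refine_blocks b Ch" "D = restrict_words B A \<inter> C"
      using B(1,2) restrict_C by (auto simp: refine_blocks_def)
    then show "D \<in> restr_part (refine_blocks b Ch) C" using B(3) unfolding restr_part_def by blast
  next
    fix D assume "D \<in> restr_part (refine_blocks b Ch) C"
    then obtain B A where BA: "B \<in> b" "D = restrict_words B A \<inter> C" "D \<noteq> {}"
      by (auto simp: restr_part_def refine_blocks_def)
    then have "D = B \<inter> C" using restrict_C[of B A] by (auto split: if_splits)
    then show "D \<in> restr_part b C" using BA(1,3) unfolding restr_part_def by blast
  qed
qed

lemma refine_blocks_in_Aset:
  assumes b: "b \<in> Orp P word_le" and Ch: "Ch \<in> PiE b index_partitions"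
  shows "b \<in> Aset P word_le (refine_blocks b Ch)"
proof -
  have "refines (refine_blocks b Ch) b"
    unfolding refines_def refine_blocks_def restrict_words_def by blast
  then show ?thesis using b restr_part_refine_blocks[OF Ch] unfolding Aset_def by auto
qed

definition block_index_partitions :: "(nat \<times> nat) set set \<Rightarrow> (nat \<times> nat) set set
    \<Rightarrow> (nat \<times> nat) set \<Rightarrow> nat set set" where
  "block_index_partitions b a = (\<lambda>B\<in>b. word_indices ` {A'\<in>a. A' \<subseteq> B})"

lemma partition_on_blocks_within:
  assumes a: "a \<in> Orp P word_le" and ba: "b \<in> Aset P word_le a" and B: "B \<in> b"
  shows "partition_on (word_indices B) (word_indices ` {A \<in> a. A \<subseteq> B})"
proof -
  have b: "b \<in> Orp P word_le" and ref: "refines a b" using ba by (auto simp: Aset_def)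
  show ?thesis
  proof (rule partition_onI)
    show "\<Union>(word_indices ` {A \<in> a. A \<subseteq> B}) = word_indices B"
    proof (intro equalityI subsetI)
      fix j assume "j \<in> \<Union>(word_indices ` {A \<in> a. A \<subseteq> B})"
      then show "j \<in> word_indices B" by (auto simp: word_indices_def)
    next
      fix j assume "j \<in> word_indices B"
      then obtain q where q: "(j, q) \<in> B" "j < length ts" by (auto simp: word_indices_def)
      then obtain A where A: "A \<in> a" "(j, q) \<in> A"
        using Orp_cover[OF a] Orp_block_subset[OF b B] by blast
      obtain B' where "B' \<in> b" "A \<subseteq> B'" using ref A(1) by (auto simp: refines_def)
      then have "A \<subseteq> B" using Orp_block_unique[OF b _ B] A(2) q(1) by blast
      moreover have "j \<in> word_indices A" using A(2) q(2) by (auto simp: word_indices_def)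
      ultimately show "j \<in> \<Union>(word_indices ` {A \<in> a. A \<subseteq> B})" using A(1) by blast
    qed
  next
    fix p q assume "p \<in> word_indices ` {A \<in> a. A \<subseteq> B}" "q \<in> word_indices ` {A \<in> a. A \<subseteq> B}" "p \<noteq> q"
    then obtain A1 A2 where A: "A1 \<in> a" "A1 \<subseteq> B" "p = word_indices A1"
      "A2 \<in> a" "A2 \<subseteq> B" "q = word_indices A2" by blast
    show "disjnt p q"
    proof (rule ccontr)
      assume "\<not> disjnt p q"
      then obtain j where j: "j \<in> word_indices A1" "j \<in> word_indices A2" using A
        by (auto simp: disjnt_def)
      then obtain q1 where q1: "(j, q1) \<in> A1" by (auto simp: word_indices_def)
      have "(j, q1) \<in> restrict_words B (word_indices A2)"
        using q1 A(2) j(2) by (auto simp: restrict_words_def)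
      then have "(j, q1) \<in> A2" using Aset_block_eq_restrict_words[OF a ba A(4) B A(5)] by simp
      then show False using Orp_block_unique[OF a A(1) A(4) q1] A \<open>p \<noteq> q\<close> by simp
    qed
  next
    show "{} \<notin> word_indices ` {A \<in> a. A \<subseteq> B}"
    proof
      assume "{} \<in> word_indices ` {A \<in> a. A \<subseteq> B}"
      then obtain A where "A \<in> a" "word_indices A = {}" by auto
      then show False
        using word_indices_nonempty[OF Orp_block_subset[OF a] Orp_block_nonempty[OF a]] by blast
    qed
  qed
qed

lemma block_index_partitions_PiE:
  assumes "a \<in> Orp P word_le" "b \<in> Aset P word_le a"
  shows "block_index_partitions b a \<in> PiE b index_partitions"
  using partition_on_blocks_within[OF assms]
  by (auto simp: block_index_partitions_def index_partitions_def)

lemma refine_blocks_block_index_partitions: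
  assumes a: "a \<in> Orp P word_le" and ba: "b \<in> Aset P word_le a"
  shows "refine_blocks b (block_index_partitions b a) = a"
proof (intro equalityI subsetI)
  fix A'' assume "A'' \<in> refine_blocks b (block_index_partitions b a)"
  then obtain B A' where BA: "B \<in> b" "A' \<in> a" "A' \<subseteq> B" "A'' = restrict_words B (word_indices A')"
    by (auto simp: refine_blocks_def block_index_partitions_def)
  have "A' = restrict_words B (word_indices A')"
    by (rule Aset_block_eq_restrict_words[OF a ba BA(2) BA(1) BA(3)])
  then show "A'' \<in> a" using BA by simp
next
  fix A' assume A': "A' \<in> a"
  have ref: "refines a b" using ba by (auto simp: Aset_def)
  then obtain B where B: "B \<in> b" "A' \<subseteq> B" using A' by (auto simp: refines_def)
  then have "A' = restrict_words B (word_indices A')" using Aset_block_eq_restrict_words[OF a ba A']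
    by simp
  then show "A' \<in> refine_blocks b (block_index_partitions b a)"
    unfolding refine_blocks_def block_index_partitions_def using A' B by auto
qed

lemma block_index_partitions_refine_blocks:
  assumes b: "b \<in> Orp P word_le" and Ch: "Ch \<in> PiE b index_partitions"
  shows "block_index_partitions b (refine_blocks b Ch) = Ch"
proof
  fix B show "block_index_partitions b (refine_blocks b Ch) B = Ch B"
  proof (cases "B \<in> b")
    case False
    then show ?thesis using PiE_arb[OF Ch False] by (simp add: block_index_partitions_def)
  next
    case True
    have ChB: "partition_on (word_indices B') (Ch B')" if "B' \<in> b" for B'
      using PiE_mem[OF Ch that] by (simp add: index_partitions_def)
    have "word_indices ` {A''\<in>refine_blocks b Ch. A'' \<subseteq> B} = Ch B"
    proof (intro equalityI subsetI)
      fix A assume "A \<in> word_indices ` {A''\<in>refine_blocks b Ch. A'' \<subseteq> B}"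
      then obtain B' A0 where BA: "B' \<in> b" "A0 \<in> Ch B'" "restrict_words B' A0 \<subseteq> B"
          "A = word_indices (restrict_words B' A0)"
        by (auto simp: refine_blocks_def)
      have sub: "A0 \<subseteq> word_indices B'" "A0 \<noteq> {}" using ChB[OF BA(1)] BA(2)
        by (auto simp: partition_on_def)
      obtain x where "x \<in> restrict_words B' A0" using restrict_words_nonempty[OF sub] by blast
      then have "B' = B" using Orp_block_unique[OF b BA(1) True, of x] BA(3)
        by (auto simp: restrict_words_def)
      then show "A \<in> Ch B" using BA word_indices_restrict_words[OF sub(1)] by simp
    next
      fix A assume A: "A \<in> Ch B"
      have sub: "A \<subseteq> word_indices B" using ChB[OF True] A by (auto simp: partition_on_def)
      have "restrict_words B A \<in> refine_blocks b Ch" "restrict_words B A \<subseteq> B"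
        unfolding refine_blocks_def using True A by (auto simp: restrict_words_def)
      then show "A \<in> word_indices ` {A''\<in>refine_blocks b Ch. A'' \<subseteq> B}"
        using word_indices_restrict_words[OF sub] by force
    qed
    then show ?thesis using True by (simp add: block_index_partitions_def)
  qed
qed

lemma inj_on_restrict_words: "(\<And>A. A \<in> \<A> \<Longrightarrow> A \<subseteq> word_indices B) \<Longrightarrow> inj_on (restrict_words B) \<A>"
  by (rule inj_on_inverseI[of _ word_indices]) (simp add: word_indices_restrict_words)

lemma gen_cumulant_refine_blocks:
  assumes b: "b \<in> Orp P word_le" and Ch: "Ch \<in> PiE b index_partitions"
  shows "gen_cumulant M X T ts (refine_blocks b Ch) = (\<Prod>B\<in>b. \<Prod>A\<in>Ch B. cumulant_of (block_moment B) A)"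
proof -
  have part: "partition_on (word_indices B) (Ch B)" if "B \<in> b" for B
    using PiE_mem[OF Ch that] by (simp add: index_partitions_def)
  have sub: "A \<subseteq> word_indices B" "A \<noteq> {}" if "B \<in> b" "A \<in> Ch B" for A B
    using part[OF that(1)] that(2) by (auto simp: partition_on_def)
  let ?jc = "\<lambda>A. joint_cumulant M (word_indices A) (\<lambda>j \<omega>. X \<omega> (0, T) (subword ts A j))"
  have disjoint: "restrict_words B ` Ch B \<inter> restrict_words B' ` Ch B' = {}"
    if "B \<in> b" "B' \<in> b" "B \<noteq> B'" for B B'
  proof -
    have "restrict_words B A \<noteq> restrict_words B' A'" if A: "A \<in> Ch B" for A A'
    proof
      assume eq: "restrict_words B A = restrict_words B' A'"
      obtain x where "x \<in> restrict_words B A" using restrict_words_nonempty[OF sub[OF \<open>B \<in> b\<close> A]]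
        by blast
      then have "x \<in> B" "x \<in> B'" using eq by (auto simp: restrict_words_def)
      then show False using Orp_block_unique[OF b \<open>B \<in> b\<close> \<open>B' \<in> b\<close>] \<open>B \<noteq> B'\<close> by blast
    qed
    then show ?thesis by blast
  qed
  have "gen_cumulant M X T ts (refine_blocks b Ch) = (\<Prod>A\<in>(\<Union>B\<in>b. restrict_words B ` Ch B). ?jc A)"
    by (simp add: gen_cumulant_eq_prod refine_blocks_def)
  also have "\<dots> = (\<Prod>B\<in>b. \<Prod>A\<in>restrict_words B ` Ch B. ?jc A)"
    using finite_Orp_blocks[OF finite_word_poset b] finite_elements[OF finite_word_indices part] disjoint
    by (intro prod.UNION_disjoint) auto
  also have "\<dots> = (\<Prod>B\<in>b. \<Prod>A\<in>Ch B. ?jc (restrict_words B A))"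
    using sub(1)
      by (intro prod.cong refl prod.reindex[OF inj_on_restrict_words, unfolded comp_def]) blast
  also have "\<dots> = (\<Prod>B\<in>b. \<Prod>A\<in>Ch B. cumulant_of (block_moment B) A)"
    using sub(1) by (intro prod.cong refl joint_cumulant_restrict_words) blast
  finally show ?thesis .
qed

lemma sum_gen_cumulant_Aset:
  assumes b: "b \<in> Orp P word_le"
  shows "(\<Sum>a\<in>{a\<in>Orp P word_le. b \<in> Aset P word_le a}. gen_cumulant M X T ts a) = (\<Prod>B\<in>b. moment B)"
proof -
  have "(\<Prod>B\<in>b. moment B) = (\<Prod>B\<in>b. \<Sum>\<pi>\<in>index_partitions B. \<Prod>A\<in>\<pi>. cumulant_of (block_moment B) A)"
  proof (rule prod.cong[OF refl])
    fix B assume B: "B \<in> b"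
    show "moment B = (\<Sum>\<pi>\<in>index_partitions B. \<Prod>A\<in>\<pi>. cumulant_of (block_moment B) A)"
      by (rule moment_eq_sum_index_partitions[OF Orp_block_subset[OF b B] Orp_block_nonempty[OF b B]])
  qed
  also have "\<dots> = (\<Sum>Ch\<in>PiE b index_partitions. \<Prod>B\<in>b. \<Prod>A\<in>Ch B. cumulant_of (block_moment B) A)"
  proof (rule prod_sum_PiE)
    show "finite b" by (rule finite_Orp_blocks[OF finite_word_poset b])
    show "finite (index_partitions B)" for B unfolding index_partitions_def
      by (rule finitely_many_partition_on[OF finite_word_indices])
  qed
  also have "\<dots> = (\<Sum>Ch\<in>PiE b index_partitions. gen_cumulant M X T ts (refine_blocks b Ch))"
    using gen_cumulant_refine_blocks[OF b] by simp
  also have "\<dots> = (\<Sum>a\<in>{a\<in>Orp P word_le. b \<in> Aset P word_le a}. gen_cumulant M X T ts a)"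
  proof (rule sum.reindex_bij_witness[where j = "refine_blocks b" and i = "block_index_partitions b"])
    fix Ch assume Ch: "Ch \<in> PiE b index_partitions"
    show "block_index_partitions b (refine_blocks b Ch) = Ch"
      using block_index_partitions_refine_blocks[OF b Ch] .
    show "refine_blocks b Ch \<in> {a\<in>Orp P word_le. b \<in> Aset P word_le a}"
      using refine_blocks_in_Aset[OF b Ch] refine_blocks_in_Orp[OF b Ch] by simp
  next
    fix a assume "a \<in> {a\<in>Orp P word_le. b \<in> Aset P word_le a}"
    then have a: "a \<in> Orp P word_le" "b \<in> Aset P word_le a" by auto
    show "refine_blocks b (block_index_partitions b a) = a"
      using refine_blocks_block_index_partitions[OF a] .
    show "block_index_partitions b a \<in> PiE b index_partitions" using block_index_partitions_PiE[OF a] .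
  qed simp
  finally show ?thesis by simp
qed

lemma tpair_sig_cumulant_eq_sum_Orp:
  "tpair (sig_cumulant M X T) (foldr tshuffle (map ew ts) (ew [])) =
   (\<Sum>a\<in>Orp P word_le. dcoef P word_le a * gen_cumulant M X T ts a)"
proof -
  define w where "w b = (-1) ^ (card b - 1) * real (part_fact P word_le b) / real (card b)" for b
  let ?Orp = "Orp P word_le"
  have fin: "finite ?Orp" by (rule finite_Orp[OF finite_word_poset])
  have "{b \<in> ?Orp. b \<in> Aset P word_le a} = Aset P word_le a" for a
    unfolding Aset_def by blast
  then have "dcoef P word_le a = (\<Sum>b\<in>{b \<in> ?Orp. b \<in> Aset P word_le a}. w b)" for a
    by (simp add: dcoef_def w_def)
  then have "(\<Sum>a\<in>?Orp. dcoef P word_le a * gen_cumulant M X T ts a)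
      = (\<Sum>a\<in>?Orp. \<Sum>b\<in>{b \<in> ?Orp. b \<in> Aset P word_le a}. w b * gen_cumulant M X T ts a)"
    by (simp add: sum_distrib_right)
  also have "\<dots> = (\<Sum>b\<in>?Orp. \<Sum>a\<in>{a \<in> ?Orp. b \<in> Aset P word_le a}. w b * gen_cumulant M X T ts a)"
    by (rule sum.swap_restrict[OF fin fin])
  also have "\<dots> = (\<Sum>b\<in>?Orp. w b * (\<Prod>B\<in>b. moment B))"
  proof (rule sum.cong[OF refl])
    fix b assume "b \<in> ?Orp"
    then show "(\<Sum>a\<in>{a \<in> ?Orp. b \<in> Aset P word_le a}. w b * gen_cumulant M X T ts a)
        = w b * (\<Prod>B\<in>b. moment B)"
      by (simp only: sum_distrib_left[symmetric] sum_gen_cumulant_Aset)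
  qed
  also have "\<dots> = tpair (sig_cumulant M X T) (foldr tshuffle (map ew ts) (ew []))"
    unfolding tpair_sig_cumulant_eq_surj_mono_maps w_def by (rule sum_Orp_eq_sum_surj_mono_maps)
  finally show ?thesis ..
qed

end

theorem corollary3p4:
  fixes M :: "'w measure" and X :: "'w \<Rightarrow> real \<times> real \<Rightarrow> nat list \<Rightarrow> real"
    and d :: nat and p T :: real and ts :: "nat list list"
  assumes "prob_space M"
    and "1 \<le> p" and "0 \<le> T"
    and "\<forall>\<omega>\<in>space M. X \<omega> \<in> wg_rough_paths d p T"
    and "\<forall>\<sigma>. is_word d \<sigma> \<longrightarrow> integrable M (\<lambda>\<omega>. X \<omega> (0, T) \<sigma>)"
    and "length ts \<ge> 1"
    and "\<forall>\<tau>\<in>set ts. \<tau> \<noteq> [] \<and> is_word d \<tau>"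
  shows "tpair (sig_cumulant M X T) (foldr tshuffle (map ew ts) (ew [])) =
         (\<Sum>a\<in>Orp (word_poset ts) word_le.
            dcoef (word_poset ts) word_le a * gen_cumulant M X T ts a)"
proof -
  have "ts \<noteq> []" using assms(6) by auto
  interpret random_rough_path M X d p T ts
    using assms(1,3,4,5,7) \<open>ts \<noteq> []\<close> by (rule random_rough_path.intro)
  show ?thesis by (rule tpair_sig_cumulant_eq_sum_Orp)
qed

end
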